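(* Let $\mathbf{x}$ be a program variable of type $\{0,1\}^2$, $\mathbf{y}$ a program variable of type $\{0,1\}$, $\mathbf{w}$ an auxiliary program variable of type $\{0,1\}^2$, and $\mathbf{z}$ any program variable distinct from $\mathbf{x},\mathbf{y},\mathbf{w}$, all in $X_{\mathrm{all}}$. With $Z=\begin{pmatrix}1&0\\0&-1\end{pmatrix}$, $X=\begin{pmatrix}0&1\\1&0\end{pmatrix}$, define $\mathsf{Keygen} := \mathbf{init}\ \mathbf{x};\ \mathbf{apply}\ U_K\ \mathbf{to}\ \mathbf{x};\ \mathbf{init}\ \mathbf{w};\ \mathbf{apply}\ U_0\ \mathbf{to}\ \mathbf{w};\ \mathbf{apply}\ \mathrm{CNOT}\ \mathbf{to}\ \mathbf{x}\mathbf{w};\ \mathbf{init}\ \mathbf{w};\ \mathbf{apply}\ U_0\ \mathbf{to}\ \mathbf{w}$, $\mathsf{Enc} := \mathbf{apply}\ \big(\sum_{k\in\{0,1\}^2}|k\rangle\langle k|\otimes X^{k_2}Z^{k_1}\big)\ \mathbf{to}\ \mathbf{x}\mathbf{y}$, $\mathsf{Dec} := \mathbf{apply}\ \big(\sum_{k\in\{0,1\}^2}|k\rangle\langle k|\otimes Z^{k_1}X^{k_2}\big)\ \mathbf{to}\ \mathbf{x}\mathbf{y}$, where $U_K$ is an isometry with $U_K|00\rangle=\frac12\sum_k|k\rangle$, $U_0$ an isometry with $U_0|00\rangle=|00\rangle$, and $\mathrm{CNOT}|a\rangle|b\rangle=|a\rangle|a\oplus b\rangle$. Then for every quantum memory $\psi$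 over $\{\mathbf{y},\mathbf{z}\}$, $\{\mathbf{y}\mathbf{z}=_q\psi\}\ \mathsf{Keygen};\mathsf{Enc};\mathsf{Dec}\ \{\mathbf{y}\mathbf{z}=_q\psi\}$.
   Context: Variables: each variable has a type (a set containing a distinguished element $0$). Variables are of three disjoint kinds: program variables, entangled ghost variables, unentangled ghost variables. For a set $V$ of variables, $\ell^2[V]$ is the Hilbert space with orthonormal basis $|m\rangle$ indexed by assignments $m$ on $V$; elements are quantum memories over $V$; $\ell^2[V\cup W]\cong\ell^2[V]\otimes\ell^2[W]$ for disjoint $V,W$. A mixed memory over $V$ is a positive trace-class operator on $\ell^2[V]$; $\mathrm{tr}_W$ is the partial trace. "$M$ on $X$" denotes $M\otimes\mathrm{id}$ on the remaining variables. A mixed memory over $V\cup W$ is $(V,W)$-separable if it is a convergent sum $\sum_i\rho_i\otimes\rho_i'$ of mixed memories over $V$ and $W$. $\mathrm{supp}\,\rho$ is the closed span of the $\psi_i$ in any decomposition $\rho=\sum_i|\psi_i\rangle\langle\psi_i|$. A predicate over $V$ is a closed subspace of $\ell^2[V]$; $X=_q\psi$ denotes $\mathrm{span}\{\psi\}\otimes\ell^2[V\setminus X]$; predicates over different variable sets are identified if they agree after tensoring with the full spaces of the missing variables. Satisfaction: for program variables $X$, entangled ghosts $E$, unentangled ghosts $U$, predicate $A$ over $X\cup E\cup U$, a mixed memory $\rho$ over $X$ satisfies $A$ ($\rho\models A$) iff there is an $(X\cup E,U)$-separable mixed memory $\rho^\circ$ over $X\cup E\cup U$ with $\mathrm{supp}\,\rho^\circ\subseteq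 A$ and $\mathrm{tr}_{E\cup U}\rho^\circ=\rho$. Programs and semantics over the fixed set $X_{\mathrm{all}}$ of program variables: $[\![\mathbf{skip}]\!]=\mathrm{id}$, $[\![c;d]\!]=[\![d]\!]\circ[\![c]\!]$, $[\![\mathbf{apply}\ U\ \mathbf{to}\ X]\!](\rho)=(U\text{ on }X)\rho(U\text{ on }X)^*$ for an isometry $U$ on $\ell^2[X]$, $[\![\mathbf{init}\ x]\!](\rho)=\mathrm{tr}_x\rho\otimes|0\rangle\langle0|_x$. The Hoare judgment $\{A\}c\{B\}$ means: for all mixed memories $\rho$ over $X_{\mathrm{all}}$ with $\rho\models A$, $[\![c]\!](\rho)\models B$. *)

theory Defs
  imports "HOL-Analysis.Analysis"
begin

text \<open>
Variables have HOL type 'v, values live in a universe 'a.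
ty v is the type of variable v (a set of values) and zr v its distinguished element 0.
An assignment on a variable set V is represented canonically as a total function
m :: 'v => 'a with m v in ty v for v in V and m v = zr v for v outside V.
Quantum memories, operators and mixed memories are represented by their
coefficients / matrix entries w.r.t. the computational basis |m>.
\<close>

definition assigns :: "('v \<Rightarrow> 'a set) \<Rightarrow> ('v \<Rightarrow> 'a) \<Rightarrow> 'v set \<Rightarrow> ('v \<Rightarrow> 'a) set" where
  "assigns ty zr V = {m. (\<forall>v\<in>V. m v \<in> ty v) \<and> (\<forall>v. v \<notin> V \<longrightarrow> m v = zr v)}"

definition restr :: "('v \<Rightarrow> 'a) \<Rightarrow> 'v set \<Rightarrow> ('v \<Rightarrow> 'a) \<Rightarrow> ('v \<Rightarrow> 'a)" where
  "restr zr V m = (\<lambda>v. if v \<in> V then m v else zr v)"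

definition ell2 :: "('v \<Rightarrow> 'a set) \<Rightarrow> ('v \<Rightarrow> 'a) \<Rightarrow> 'v set \<Rightarrow> (('v \<Rightarrow> 'a) \<Rightarrow> complex) set" where
  "ell2 ty zr V = {f. (\<forall>m. f m \<noteq> 0 \<longrightarrow> m \<in> assigns ty zr V) \<and>
                      (\<lambda>m. (cmod (f m))\<^sup>2) summable_on UNIV}"

definition l2norm :: "(('v \<Rightarrow> 'a) \<Rightarrow> complex) \<Rightarrow> real" where
  "l2norm f = sqrt (infsum (\<lambda>m. (cmod (f m))\<^sup>2) UNIV)"

definition fspan :: "(('v \<Rightarrow> 'a) \<Rightarrow> complex) set \<Rightarrow> (('v \<Rightarrow> 'a) \<Rightarrow> complex) set" where
  "fspan S = {g. \<exists>F c. finite F \<and> F \<subseteq> S \<and> g = (\<lambda>m. \<Sum>s\<in>F. c s * s m)}"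

definition cspan :: "('v \<Rightarrow> 'a set) \<Rightarrow> ('v \<Rightarrow> 'a) \<Rightarrow> 'v set \<Rightarrow> (('v \<Rightarrow> 'a) \<Rightarrow> complex) set
    \<Rightarrow> (('v \<Rightarrow> 'a) \<Rightarrow> complex) set" where
  "cspan ty zr V S = {f \<in> ell2 ty zr V. \<forall>e>0. \<exists>g\<in>fspan S. l2norm (\<lambda>m. f m - g m) < e}"

text \<open>Tensor product of vectors over disjoint V, W (a vector over V \<union> W).\<close>
definition tensor_vec :: "('v \<Rightarrow> 'a set) \<Rightarrow> ('v \<Rightarrow> 'a) \<Rightarrow> 'v set \<Rightarrow> 'v set
    \<Rightarrow> (('v \<Rightarrow> 'a) \<Rightarrow> complex) \<Rightarrow> (('v \<Rightarrow> 'a) \<Rightarrow> complex) \<Rightarrow> (('v \<Rightarrow> 'a) \<Rightarrow> complex)" where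
  "tensor_vec ty zr V W f g = (\<lambda>m. if m \<in> assigns ty zr (V \<union> W)
      then f (restr zr V m) * g (restr zr W m) else 0)"

text \<open>Tensor product of operators (given by matrices) over disjoint V, W.\<close>
definition tensor_op :: "('v \<Rightarrow> 'a set) \<Rightarrow> ('v \<Rightarrow> 'a) \<Rightarrow> 'v set \<Rightarrow> 'v set
    \<Rightarrow> (('v \<Rightarrow> 'a) \<Rightarrow> ('v \<Rightarrow> 'a) \<Rightarrow> complex) \<Rightarrow> (('v \<Rightarrow> 'a) \<Rightarrow> ('v \<Rightarrow> 'a) \<Rightarrow> complex)
    \<Rightarrow> (('v \<Rightarrow> 'a) \<Rightarrow> ('v \<Rightarrow> 'a) \<Rightarrow> complex)" where
  "tensor_op ty zr V W A B = (\<lambda>m m'. if m \<in> assigns ty zr (V \<union> W) \<and> m' \<in> assigns ty zr (V \<union> W)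
      then A (restr zr V m) (restr zr V m') * B (restr zr W m) (restr zr W m') else 0)"

definition decomp :: "('v \<Rightarrow> 'a set) \<Rightarrow> ('v \<Rightarrow> 'a) \<Rightarrow> 'v set
    \<Rightarrow> (('v \<Rightarrow> 'a) \<Rightarrow> ('v \<Rightarrow> 'a) \<Rightarrow> complex) \<Rightarrow> (nat \<Rightarrow> ('v \<Rightarrow> 'a) \<Rightarrow> complex) \<Rightarrow> bool" where
  "decomp ty zr V \<rho> \<psi> \<longleftrightarrow> (\<forall>i. \<psi> i \<in> ell2 ty zr V) \<and> summable (\<lambda>i. (l2norm (\<psi> i))\<^sup>2) \<and>
     (\<forall>m m'. (\<lambda>i. \<psi> i m * cnj (\<psi> i m')) sums \<rho> m m')"

text \<open>Mixed memory over V = positive trace-class operator on ell2[V] (as matrix).\<close>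
definition is_mixed :: "('v \<Rightarrow> 'a set) \<Rightarrow> ('v \<Rightarrow> 'a) \<Rightarrow> 'v set
    \<Rightarrow> (('v \<Rightarrow> 'a) \<Rightarrow> ('v \<Rightarrow> 'a) \<Rightarrow> complex) \<Rightarrow> bool" where
  "is_mixed ty zr V \<rho> \<longleftrightarrow> (\<exists>\<psi>. decomp ty zr V \<rho> \<psi>)"

definition supp :: "('v \<Rightarrow> 'a set) \<Rightarrow> ('v \<Rightarrow> 'a) \<Rightarrow> 'v set
    \<Rightarrow> (('v \<Rightarrow> 'a) \<Rightarrow> ('v \<Rightarrow> 'a) \<Rightarrow> complex) \<Rightarrow> (('v \<Rightarrow> 'a) \<Rightarrow> complex) set" where
  "supp ty zr V \<rho> = cspan ty zr V (range (SOME \<psi>. decomp ty zr V \<rho> \<psi>))"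

text \<open>Partial trace over W of an operator over V \<union> W (V, W disjoint); result over V.\<close>
definition ptrace :: "('v \<Rightarrow> 'a set) \<Rightarrow> ('v \<Rightarrow> 'a) \<Rightarrow> 'v set \<Rightarrow> 'v set
    \<Rightarrow> (('v \<Rightarrow> 'a) \<Rightarrow> ('v \<Rightarrow> 'a) \<Rightarrow> complex) \<Rightarrow> (('v \<Rightarrow> 'a) \<Rightarrow> ('v \<Rightarrow> 'a) \<Rightarrow> complex)" where
  "ptrace ty zr V W \<rho> = (\<lambda>m m'. if m \<in> assigns ty zr V \<and> m' \<in> assigns ty zr V then
      infsum (\<lambda>n. \<rho> (\<lambda>v. if v \<in> W then n v else m v) (\<lambda>v. if v \<in> W then n v else m' v))
             (assigns ty zr W)
    else 0)"

definition separable :: "('v \<Rightarrow> 'a set) \<Rightarrow> ('v \<Rightarrow> 'a) \<Rightarrow> 'v set \<Rightarrow> 'v set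
    \<Rightarrow> (('v \<Rightarrow> 'a) \<Rightarrow> ('v \<Rightarrow> 'a) \<Rightarrow> complex) \<Rightarrow> bool" where
  "separable ty zr V W \<rho> \<longleftrightarrow> (\<exists>\<rho>1 \<rho>2. (\<forall>i. is_mixed ty zr V (\<rho>1 i) \<and> is_mixed ty zr W (\<rho>2 i)) \<and>
     (\<forall>m m'. (\<lambda>i. tensor_op ty zr V W (\<rho>1 i) (\<rho>2 i) m m') sums \<rho> m m'))"

text \<open>Predicate Y =_q psi over the variable set V (psi a memory over Y \<subseteq> V):
  span{psi} tensor ell2[V - Y], i.e. the closed span of the product vectors.\<close>
definition eqq :: "('v \<Rightarrow> 'a set) \<Rightarrow> ('v \<Rightarrow> 'a) \<Rightarrow> 'v set \<Rightarrow> 'v set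
    \<Rightarrow> (('v \<Rightarrow> 'a) \<Rightarrow> complex) \<Rightarrow> (('v \<Rightarrow> 'a) \<Rightarrow> complex) set" where
  "eqq ty zr V Y \<psi> = cspan ty zr V
     {tensor_vec ty zr Y (V - Y) (\<lambda>m. c * \<psi> m) g | c g. g \<in> ell2 ty zr (V - Y)}"

definition sat :: "('v \<Rightarrow> 'a set) \<Rightarrow> ('v \<Rightarrow> 'a) \<Rightarrow> 'v set \<Rightarrow> 'v set \<Rightarrow> 'v set
    \<Rightarrow> (('v \<Rightarrow> 'a) \<Rightarrow> ('v \<Rightarrow> 'a) \<Rightarrow> complex) \<Rightarrow> (('v \<Rightarrow> 'a) \<Rightarrow> complex) set \<Rightarrow> bool" where
  "sat ty zr X E U \<rho> A \<longleftrightarrow> (\<exists>\<rho>0. is_mixed ty zr (X \<union> E \<union> U) \<rho>0 \<and>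
      separable ty zr (X \<union> E) U \<rho>0 \<and> supp ty zr (X \<union> E \<union> U) \<rho>0 \<subseteq> A \<and>
      ptrace ty zr X (E \<union> U) \<rho>0 = \<rho>)"

text \<open>Isometry on ell2[V] given by its matrix K (K m n = <m|K|n>).\<close>
definition is_isometry :: "('v \<Rightarrow> 'a set) \<Rightarrow> ('v \<Rightarrow> 'a) \<Rightarrow> 'v set
    \<Rightarrow> (('v \<Rightarrow> 'a) \<Rightarrow> ('v \<Rightarrow> 'a) \<Rightarrow> complex) \<Rightarrow> bool" where
  "is_isometry ty zr V K \<longleftrightarrow>
     (\<forall>m n. K m n \<noteq> 0 \<longrightarrow> m \<in> assigns ty zr V \<and> n \<in> assigns ty zr V) \<and>
     (\<forall>n\<in>assigns ty zr V. (\<lambda>m. K m n) \<in> ell2 ty zr V) \<and>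
     (\<forall>n\<in>assigns ty zr V. \<forall>n'\<in>assigns ty zr V.
        infsum (\<lambda>m. cnj (K m n) * K m n') UNIV = (if n = n' then 1 else 0))"

definition lift_op :: "('v \<Rightarrow> 'a set) \<Rightarrow> ('v \<Rightarrow> 'a) \<Rightarrow> 'v set \<Rightarrow> 'v set
    \<Rightarrow> (('v \<Rightarrow> 'a) \<Rightarrow> ('v \<Rightarrow> 'a) \<Rightarrow> complex) \<Rightarrow> (('v \<Rightarrow> 'a) \<Rightarrow> ('v \<Rightarrow> 'a) \<Rightarrow> complex)" where
  "lift_op ty zr Xall X K = (\<lambda>m n. if m \<in> assigns ty zr Xall \<and> n \<in> assigns ty zr Xall \<and>
      (\<forall>v. v \<notin> X \<longrightarrow> m v = n v) then K (restr zr X m) (restr zr X n) else 0)"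

datatype ('v, 'a) prog =
    Skip
  | Seq "('v, 'a) prog" "('v, 'a) prog"
  | Apply "('v \<Rightarrow> 'a) \<Rightarrow> ('v \<Rightarrow> 'a) \<Rightarrow> complex" "'v set"
  | Init 'v

definition proj0 :: "('v \<Rightarrow> 'a) \<Rightarrow> (('v \<Rightarrow> 'a) \<Rightarrow> ('v \<Rightarrow> 'a) \<Rightarrow> complex)" where
  "proj0 zr = (\<lambda>m m'. if m = zr \<and> m' = zr then 1 else 0)"

primrec sem :: "('v \<Rightarrow> 'a set) \<Rightarrow> ('v \<Rightarrow> 'a) \<Rightarrow> 'v set \<Rightarrow> ('v, 'a) prog
    \<Rightarrow> (('v \<Rightarrow> 'a) \<Rightarrow> ('v \<Rightarrow> 'a) \<Rightarrow> complex) \<Rightarrow> (('v \<Rightarrow> 'a) \<Rightarrow> ('v \<Rightarrow> 'a) \<Rightarrow> complex)" where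
  "sem ty zr Xall Skip \<rho> = \<rho>"
| "sem ty zr Xall (Seq c d) \<rho> = sem ty zr Xall d (sem ty zr Xall c \<rho>)"
| "sem ty zr Xall (Apply K X) \<rho> =
     (let L = lift_op ty zr Xall X K in
      (\<lambda>m m'. infsum (\<lambda>n. L m n * infsum (\<lambda>n'. \<rho> n n' * cnj (L m' n')) UNIV) UNIV))"
| "sem ty zr Xall (Init x) \<rho> =
     tensor_op ty zr (Xall - {x}) {x} (ptrace ty zr (Xall - {x}) {x} \<rho>) (proj0 zr)"

text \<open>Hoare judgment over program variables Xall, entangled ghosts E, unentangled ghosts U.\<close>
definition hoare :: "('v \<Rightarrow> 'a set) \<Rightarrow> ('v \<Rightarrow> 'a) \<Rightarrow> 'v set \<Rightarrow> 'v set \<Rightarrow> 'v set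
    \<Rightarrow> (('v \<Rightarrow> 'a) \<Rightarrow> complex) set \<Rightarrow> ('v, 'a) prog \<Rightarrow> (('v \<Rightarrow> 'a) \<Rightarrow> complex) set \<Rightarrow> bool" where
  "hoare ty zr Xall E U A c B \<longleftrightarrow> (\<forall>\<rho>. is_mixed ty zr Xall \<rho> \<and> sat ty zr Xall E U \<rho> A \<longrightarrow>
      sat ty zr Xall E U (sem ty zr Xall c \<rho>) B)"

text \<open>Concrete gates. Bits: 0 = False, 1 = True; an element k of {0,1}^2 is (k1, k2).\<close>
definition xor2 :: "bool \<times> bool \<Rightarrow> bool \<times> bool \<Rightarrow> bool \<times> bool" where
  "xor2 a b = (fst a \<noteq> fst b, snd a \<noteq> snd b)"

definition cnotK :: "('v \<Rightarrow> 'a) \<Rightarrow> 'v \<Rightarrow> 'v \<Rightarrow> (bool \<times> bool \<Rightarrow> 'a) \<Rightarrow> (bool \<times> bool \<Rightarrow> 'a)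
    \<Rightarrow> ('v \<Rightarrow> 'a) \<Rightarrow> ('v \<Rightarrow> 'a) \<Rightarrow> complex" where
  "cnotK zr x w ex ew m n = (if \<exists>a b. n = zr(x := ex a, w := ew b) \<and> m = zr(x := ex a, w := ew (xor2 a b))
      then 1 else 0)"

definition Zm :: "bool \<Rightarrow> bool \<Rightarrow> complex" where
  "Zm b b' = (if b = b' then (if b then -1 else 1) else 0)"
definition Xm :: "bool \<Rightarrow> bool \<Rightarrow> complex" where
  "Xm b b' = (if b \<noteq> b' then 1 else 0)"
definition mmul :: "(bool \<Rightarrow> bool \<Rightarrow> complex) \<Rightarrow> (bool \<Rightarrow> bool \<Rightarrow> complex) \<Rightarrow> bool \<Rightarrow> bool \<Rightarrow> complex" where
  "mmul A B b b' = (\<Sum>c\<in>UNIV. A b c * B c b')"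
definition mpow :: "(bool \<Rightarrow> bool \<Rightarrow> complex) \<Rightarrow> bool \<Rightarrow> bool \<Rightarrow> bool \<Rightarrow> complex" where
  "mpow A k = (if k then A else (\<lambda>b b'. if b = b' then 1 else 0))"

text \<open>sum_k |k><k| (x) M k, acting on x y.\<close>
definition ctrlK :: "('v \<Rightarrow> 'a) \<Rightarrow> 'v \<Rightarrow> 'v \<Rightarrow> (bool \<times> bool \<Rightarrow> 'a) \<Rightarrow> (bool \<Rightarrow> 'a)
    \<Rightarrow> (bool \<times> bool \<Rightarrow> bool \<Rightarrow> bool \<Rightarrow> complex) \<Rightarrow> ('v \<Rightarrow> 'a) \<Rightarrow> ('v \<Rightarrow> 'a) \<Rightarrow> complex" where
  "ctrlK zr x y ex ey M m n = (\<Sum>(k, b, b')\<in>UNIV.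
      if m = zr(x := ex k, y := ey b) \<and> n = zr(x := ex k, y := ey b') then M k b b' else 0)"

definition encM :: "bool \<times> bool \<Rightarrow> bool \<Rightarrow> bool \<Rightarrow> complex" where
  "encM k = mmul (mpow Xm (snd k)) (mpow Zm (fst k))"
definition decM :: "bool \<times> bool \<Rightarrow> bool \<Rightarrow> bool \<Rightarrow> complex" where
  "decM k = mmul (mpow Zm (fst k)) (mpow Xm (snd k))"

end

theory Submission
  imports Defs
begin

text \<open>
  The key notion is factor_op: along every fibre of assignments that agree outside {y, z}, the
  columns of the density matrix are proportional to \<psi>. For a mixed memory this holds iff every
  vector of a decomposition lies in the predicate y z =_q \<psi>, and it is preserved by partial
  traces; so the precondition yields it for the input state, and conversely a mixed memory with
  this property satisfies y z =_q \<psi> with trivial ghosts.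

  The program never touches y or z. Computing its semantics explicitly, key generation replaces
  the initial contents of x and w by a uniformly random classical key in x (the coherences in x
  vanish because w holds a copy of the key that is then discarded), and decryption undoes
  encryption exactly. The final state is a finite sum of reindexed restrictions of the input, so
  it is again a mixed memory, and it still satisfies the fibre condition.
\<close>

section \<open>Square-summable vectors\<close>

lemma ell2_sq_summable: "f \<in> ell2 ty zr V \<Longrightarrow> (\<lambda>m. (cmod (f m))\<^sup>2) summable_on UNIV"
  by (simp add: ell2_def)

lemma ell2_supp: "f \<in> ell2 ty zr V \<Longrightarrow> f m \<noteq> 0 \<Longrightarrow> m \<in> assigns ty zr V"
  by (simp add: ell2_def)

lemma l2norm_sq: "(l2norm f)\<^sup>2 = infsum (\<lambda>m. (cmod (f m))\<^sup>2) UNIV"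
  unfolding l2norm_def by (simp add: infsum_nonneg)

lemma l2norm_zero [simp]: "l2norm (\<lambda>m. 0) = 0"
  by (simp add: l2norm_def)

lemma norm_le_l2norm:
  assumes "(\<lambda>m. (cmod (f m))\<^sup>2) summable_on UNIV"
  shows "cmod (f m) \<le> l2norm f"
proof -
  have "(\<Sum>n\<in>{m}. (cmod (f n))\<^sup>2) \<le> infsum (\<lambda>n. (cmod (f n))\<^sup>2) UNIV"
    by (rule finite_sum_le_infsum[OF assms]) auto
  then show ?thesis
    unfolding l2norm_def using real_le_rsqrt by simp
qed

lemma sq_summable_add:
  fixes f g :: "'b \<Rightarrow> complex"
  assumes "(\<lambda>m. (cmod (f m))\<^sup>2) summable_on UNIV" "(\<lambda>m. (cmod (g m))\<^sup>2) summable_on UNIV"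
  shows "(\<lambda>m. (cmod (f m + g m))\<^sup>2) summable_on UNIV"
proof (rule summable_on_comparison_test)
  show "(\<lambda>m. 2 * (cmod (f m))\<^sup>2 + 2 * (cmod (g m))\<^sup>2) summable_on UNIV"
    by (intro summable_on_add summable_on_cmult_right assms)
  fix m
  have "(cmod (f m + g m))\<^sup>2 \<le> (cmod (f m) + cmod (g m))\<^sup>2"
    by (simp add: power_mono norm_triangle_ineq)
  also have "\<dots> \<le> 2 * (cmod (f m))\<^sup>2 + 2 * (cmod (g m))\<^sup>2"
    by (smt (verit, best) sum_squares_bound power2_sum)
  finally show "(cmod (f m + g m))\<^sup>2 \<le> 2 * (cmod (f m))\<^sup>2 + 2 * (cmod (g m))\<^sup>2" .
qed simp

lemma sq_summable_cmult:
  fixes f :: "'b \<Rightarrow> complex"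
  assumes "(\<lambda>m. (cmod (f m))\<^sup>2) summable_on UNIV"
  shows "(\<lambda>m. (cmod (c * f m))\<^sup>2) summable_on UNIV"
  using summable_on_cmult_right[OF assms, of "(cmod c)\<^sup>2"]
  by (simp add: norm_mult power_mult_distrib)

lemma ell2_add: "f \<in> ell2 ty zr V \<Longrightarrow> g \<in> ell2 ty zr V \<Longrightarrow> (\<lambda>m. f m + g m) \<in> ell2 ty zr V"
  unfolding ell2_def using sq_summable_add by force

lemma ell2_cmult: "f \<in> ell2 ty zr V \<Longrightarrow> (\<lambda>m. c * f m) \<in> ell2 ty zr V"
  unfolding ell2_def using sq_summable_cmult by force

lemma ell2_zero: "(\<lambda>m. 0) \<in> ell2 ty zr V"
  unfolding ell2_def by simp

lemma ell2_diff: "f \<in> ell2 ty zr V \<Longrightarrow> g \<in> ell2 ty zr V \<Longrightarrow> (\<lambda>m. f m - g m) \<in> ell2 ty zr V"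
  using ell2_add[of f ty zr V "\<lambda>m. (-1) * g m"] ell2_cmult[of g ty zr V "-1"] by simp

lemma ell2_sum:
  "finite F \<Longrightarrow> (\<And>s. s \<in> F \<Longrightarrow> h s \<in> ell2 ty zr V) \<Longrightarrow> (\<lambda>m. \<Sum>s\<in>F. h s m) \<in> ell2 ty zr V"
  by (induction F rule: finite_induct) (simp_all add: ell2_zero ell2_add)

lemma fspan_ell2: "S \<subseteq> ell2 ty zr V \<Longrightarrow> fspan S \<subseteq> ell2 ty zr V"
  unfolding fspan_def by (auto intro!: ell2_sum ell2_cmult)

lemma fspan_singleton: "f \<in> S \<Longrightarrow> f \<in> fspan S"
  unfolding fspan_def by (rule CollectI, rule exI[of _ "{f}"], rule exI[of _ "\<lambda>_. 1"]) auto

lemma in_cspan: "f \<in> ell2 ty zr V \<Longrightarrow> f \<in> S \<Longrightarrow> f \<in> cspan ty zr V S"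
  unfolding cspan_def using fspan_singleton by force

lemma restr_in_assigns: "m \<in> assigns ty zr W \<Longrightarrow> V \<subseteq> W \<Longrightarrow> restr zr V m \<in> assigns ty zr V"
  unfolding assigns_def restr_def by auto

lemma assigns_mono: "X \<subseteq> W \<Longrightarrow> \<forall>v. zr v \<in> ty v \<Longrightarrow> assigns ty zr X \<subseteq> assigns ty zr W"
  unfolding assigns_def by auto

lemma ell2_mono: "X \<subseteq> W \<Longrightarrow> \<forall>v. zr v \<in> ty v \<Longrightarrow> ell2 ty zr X \<subseteq> ell2 ty zr W"
  using assigns_mono unfolding ell2_def by blast

section \<open>Vectors factoring through \<psi>\<close>

definition agree_off :: "('v \<Rightarrow> 'a set) \<Rightarrow> ('v \<Rightarrow> 'a) \<Rightarrow> 'v set \<Rightarrow> 'v set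
    \<Rightarrow> ('v \<Rightarrow> 'a) \<Rightarrow> ('v \<Rightarrow> 'a) \<Rightarrow> bool" where
  "agree_off ty zr W Y m m' \<longleftrightarrow>
     m \<in> assigns ty zr W \<and> m' \<in> assigns ty zr W \<and> (\<forall>v. v \<notin> Y \<longrightarrow> m v = m' v)"

text \<open>Vectors over W whose restriction to every fibre (assignments agreeing outside Y) is a
  multiple of \<psi>; the cross-multiplied form avoids dividing by \<psi>.\<close>
definition factor_vecs :: "('v \<Rightarrow> 'a set) \<Rightarrow> ('v \<Rightarrow> 'a) \<Rightarrow> 'v set \<Rightarrow> 'v set
    \<Rightarrow> (('v \<Rightarrow> 'a) \<Rightarrow> complex) \<Rightarrow> (('v \<Rightarrow> 'a) \<Rightarrow> complex) set" where
  "factor_vecs ty zr W Y \<psi> = {f \<in> ell2 ty zr W.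
     (\<forall>m m'. agree_off ty zr W Y m m' \<longrightarrow> f m * \<psi> (restr zr Y m') = f m' * \<psi> (restr zr Y m)) \<and>
     (\<psi> = (\<lambda>_. 0) \<longrightarrow> f = (\<lambda>_. 0))}"

lemma fspan_factor_vecs:
  assumes "S \<subseteq> factor_vecs ty zr W Y \<psi>"
  shows "fspan S \<subseteq> factor_vecs ty zr W Y \<psi>"
proof
  fix g assume "g \<in> fspan S"
  then obtain F c where F: "finite F" "F \<subseteq> S" "g = (\<lambda>m. \<Sum>s\<in>F. c s * s m)"
    unfolding fspan_def by blast
  have "g \<in> ell2 ty zr W"
    using \<open>g \<in> fspan S\<close> assms fspan_ell2[of S ty zr W] unfolding factor_vecs_def by blast
  moreover have "g m * \<psi> (restr zr Y m') = g m' * \<psi> (restr zr Y m)"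
    if "agree_off ty zr W Y m m'" for m m'
  proof -
    have "g m * \<psi> (restr zr Y m') = (\<Sum>s\<in>F. c s * (s m * \<psi> (restr zr Y m')))"
      by (simp add: F(3) sum_distrib_right mult.assoc)
    also have "\<dots> = (\<Sum>s\<in>F. c s * (s m' * \<psi> (restr zr Y m)))"
      using F(2) assms that unfolding factor_vecs_def by (intro sum.cong) auto
    also have "\<dots> = g m' * \<psi> (restr zr Y m)"
      by (simp add: F(3) sum_distrib_right mult.assoc)
    finally show ?thesis .
  qed
  moreover have "g = (\<lambda>_. 0)" if "\<psi> = (\<lambda>_. 0)"
  proof -
    have "\<forall>s\<in>F. s = (\<lambda>_. 0)" using F(2) assms that unfolding factor_vecs_def by auto
    then show ?thesis unfolding F(3) by (intro ext sum.neutral) auto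
  qed
  ultimately show "g \<in> factor_vecs ty zr W Y \<psi>"
    unfolding factor_vecs_def by blast
qed

lemma eq_0_if_le_eps_mult:
  fixes D :: real
  assumes "D \<ge> 0" "C \<ge> 0" "\<And>e. e > 0 \<Longrightarrow> D \<le> e * C"
  shows "D = 0"
proof (rule ccontr)
  assume "D \<noteq> 0"
  with assms(1) have "D > 0" by simp
  define e where "e = D / (2 * (C + 1))"
  have "e > 0" using \<open>D > 0\<close> assms(2) by (simp add: e_def)
  have "e * C \<le> e * (C + 1)" using \<open>e > 0\<close> by simp
  also have "\<dots> = D / 2" using assms(2) by (simp add: e_def field_simps)
  finally show False using assms(3)[OF \<open>e > 0\<close>] \<open>D > 0\<close> by simp
qed

text \<open>The defining conditions of factor_vecs are pointwise, and l2-convergence implies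
  pointwise convergence, so the set is closed.\<close>
lemma cspan_factor_vecs:
  assumes "S \<subseteq> factor_vecs ty zr W Y \<psi>"
  shows "cspan ty zr W S \<subseteq> factor_vecs ty zr W Y \<psi>"
proof
  fix f assume f: "f \<in> cspan ty zr W S"
  have fe: "f \<in> ell2 ty zr W" using f unfolding cspan_def by blast
  have approx: "\<exists>g\<in>fspan S. l2norm (\<lambda>m. f m - g m) < e" if "e > 0" for e
    using f that unfolding cspan_def by blast
  have FP: "fspan S \<subseteq> factor_vecs ty zr W Y \<psi>" by (rule fspan_factor_vecs[OF assms])
  have bound: "cmod (f m - g m) \<le> l2norm (\<lambda>m. f m - g m)" if "g \<in> fspan S" for g m
  proof -
    have "g \<in> ell2 ty zr W" using FP that unfolding factor_vecs_def by blast
    then have "(\<lambda>m. f m - g m) \<in> ell2 ty zr W" using fe by (rule ell2_diff[rotated])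
    then show ?thesis by (rule norm_le_l2norm[OF ell2_sq_summable])
  qed
  have "f m * \<psi> (restr zr Y m') = f m' * \<psi> (restr zr Y m)" if ag: "agree_off ty zr W Y m m'" for m m'
  proof -
    define a where "a = \<psi> (restr zr Y m)"
    define b where "b = \<psi> (restr zr Y m')"
    have "cmod (f m * b - f m' * a) = 0"
    proof (rule eq_0_if_le_eps_mult)
      fix e :: real assume "e > 0"
      then obtain g where g: "g \<in> fspan S" "l2norm (\<lambda>m. f m - g m) < e" using approx by blast
      have "g m * b = g m' * a" using FP g(1) ag unfolding factor_vecs_def a_def b_def by blast
      then have "f m * b - f m' * a = (f m - g m) * b - (f m' - g m') * a"
        by (simp add: algebra_simps)
      then have "cmod (f m * b - f m' * a) \<le> cmod (f m - g m) * cmod b + cmod (f m' - g m') * cmod a"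
        by (metis norm_diff_ineq norm_mult norm_triangle_ineq4 order_trans)
      also have "\<dots> \<le> e * cmod b + e * cmod a"
        using bound[OF g(1), of m] bound[OF g(1), of m'] g(2)
        by (intro add_mono mult_right_mono) auto
      finally show "cmod (f m * b - f m' * a) \<le> e * (cmod a + cmod b)"
        by (simp add: algebra_simps)
    qed auto
    then show ?thesis by (simp add: a_def b_def)
  qed
  moreover have "f = (\<lambda>_. 0)" if "\<psi> = (\<lambda>_. 0)"
  proof
    fix m
    have "cmod (f m) = 0"
    proof (rule eq_0_if_le_eps_mult[where C = 1])
      fix e :: real assume "e > 0"
      then obtain g where g: "g \<in> fspan S" "l2norm (\<lambda>m. f m - g m) < e" using approx by blast
      have "g = (\<lambda>_. 0)" using FP g(1) that unfolding factor_vecs_def by blast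
      then show "cmod (f m) \<le> e * 1" using bound[OF g(1), of m] g(2) by simp
    qed auto
    then show "f m = 0" by simp
  qed
  ultimately show "f \<in> factor_vecs ty zr W Y \<psi>"
    using fe unfolding factor_vecs_def by blast
qed

lemma tensor_vec_ell2:
  assumes f: "f \<in> ell2 ty zr V" and g: "g \<in> ell2 ty zr W"
  shows "tensor_vec ty zr V W f g \<in> ell2 ty zr (V \<union> W)"
proof -
  let ?t = "tensor_vec ty zr V W f g"
  define G where "G = (\<lambda>(a, r). (cmod (f a))\<^sup>2 * (cmod (g r))\<^sup>2)"
  have gs: "(\<lambda>r. (cmod (g r))\<^sup>2) summable_on UNIV" using ell2_sq_summable[OF g] .
  have GS: "G summable_on UNIV \<times> UNIV"
  proof (rule summable_on_SigmaI)
    show "((\<lambda>r. G (a, r)) has_sum ((cmod (f a))\<^sup>2 * infsum (\<lambda>r. (cmod (g r))\<^sup>2) UNIV)) UNIV" for a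
      unfolding G_def by (simp add: has_sum_cmult_right gs)
    show "(\<lambda>a. (cmod (f a))\<^sup>2 * infsum (\<lambda>r. (cmod (g r))\<^sup>2) UNIV) summable_on UNIV"
      using summable_on_cmult_left[OF ell2_sq_summable[OF f]] by simp
  qed (simp add: G_def)
  define h where "h m = (restr zr V m, restr zr W m)" for m
  have "inj_on h (assigns ty zr (V \<union> W))"
  proof
    fix m m' assume a: "m \<in> assigns ty zr (V \<union> W)" "m' \<in> assigns ty zr (V \<union> W)" "h m = h m'"
    show "m = m'"
    proof
      fix v
      have "restr zr V m v = restr zr V m' v" "restr zr W m v = restr zr W m' v"
        using a(3) unfolding h_def by auto
      then show "m v = m' v"
        using a(1,2) unfolding restr_def assigns_def by (cases "v \<in> V"; cases "v \<in> W") auto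
    qed
  qed
  moreover have "G summable_on h ` assigns ty zr (V \<union> W)"
    by (rule summable_on_subset[OF GS]) auto
  ultimately have s1: "(G \<circ> h) summable_on assigns ty zr (V \<union> W)"
    by (simp add: summable_on_reindex)
  have "(\<lambda>m. (cmod (?t m))\<^sup>2) summable_on UNIV"
  proof (rule summable_on_cong_neutral[THEN iffD1, OF _ _ _ s1])
    show "\<And>m. m \<in> UNIV - assigns ty zr (V \<union> W) \<Longrightarrow> (cmod (?t m))\<^sup>2 = 0"
      unfolding tensor_vec_def by auto
    show "\<And>m. m \<in> assigns ty zr (V \<union> W) \<inter> UNIV \<Longrightarrow> (G \<circ> h) m = (cmod (?t m))\<^sup>2"
      unfolding tensor_vec_def G_def h_def by (auto simp: norm_mult power_mult_distrib)
  qed simp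
  then show ?thesis
    unfolding ell2_def by (auto simp: tensor_vec_def split: if_splits)
qed

lemma tensor_vec_in_factor_vecs:
  assumes Y: "Y \<subseteq> W" and psi: "\<psi> \<in> ell2 ty zr Y" and g: "g \<in> ell2 ty zr (W - Y)"
  shows "tensor_vec ty zr Y (W - Y) (\<lambda>m. c * \<psi> m) g \<in> factor_vecs ty zr W Y \<psi>"
proof -
  let ?t = "tensor_vec ty zr Y (W - Y) (\<lambda>m. c * \<psi> m) g"
  have UW: "Y \<union> (W - Y) = W" using Y by blast
  have "?t \<in> ell2 ty zr W"
    using tensor_vec_ell2[OF ell2_cmult[OF psi] g] unfolding UW .
  moreover have "?t m * \<psi> (restr zr Y m') = ?t m' * \<psi> (restr zr Y m)"
    if "agree_off ty zr W Y m m'" for m m'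
  proof -
    have "restr zr (W - Y) m = restr zr (W - Y) m'"
      using that unfolding agree_off_def restr_def by auto
    then show ?thesis using that UW unfolding agree_off_def tensor_vec_def by simp
  qed
  moreover have "\<psi> = (\<lambda>_. 0) \<Longrightarrow> ?t = (\<lambda>_. 0)"
    unfolding tensor_vec_def by auto
  ultimately show ?thesis unfolding factor_vecs_def by blast
qed

lemma sq_summable_restrict_reindex:
  assumes f: "(\<lambda>n. (cmod (f n))\<^sup>2) summable_on UNIV" and inj: "inj_on g S"
  shows "(\<lambda>m. (cmod (if m \<in> S then c * f (g m) else 0))\<^sup>2) summable_on UNIV"
proof -
  have "(\<lambda>n. (cmod (f n))\<^sup>2) summable_on g ` S" by (rule summable_on_subset[OF f]) auto
  then have "((\<lambda>n. (cmod (f n))\<^sup>2) \<circ> g) summable_on S" by (simp add: summable_on_reindex[OF inj])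
  then have s: "(\<lambda>m. (cmod c)\<^sup>2 * (cmod (f (g m)))\<^sup>2) summable_on S"
    by (intro summable_on_cmult_right) (simp add: o_def)
  show ?thesis
  proof (rule summable_on_cong_neutral[THEN iffD1, OF _ _ _ s])
    show "\<And>m. m \<in> UNIV - S \<Longrightarrow> (cmod (if m \<in> S then c * f (g m) else 0))\<^sup>2 = 0" by simp
    show "\<And>m. m \<in> S \<inter> UNIV \<Longrightarrow> (cmod c)\<^sup>2 * (cmod (f (g m)))\<^sup>2 = (cmod (if m \<in> S then c * f (g m) else 0))\<^sup>2"
      by (simp add: norm_mult power_mult_distrib)
  qed simp
qed

lemma ell2_restrict_reindex:
  assumes f: "f \<in> ell2 ty zr W" and S: "S \<subseteq> assigns ty zr V" and inj: "inj_on g S"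
  shows "(\<lambda>m. if m \<in> S then c * f (g m) else 0) \<in> ell2 ty zr V"
  using sq_summable_restrict_reindex[OF ell2_sq_summable[OF f] inj] S unfolding ell2_def by auto

lemma l2norm_restrict_reindex_le:
  assumes f: "(\<lambda>n. (cmod (f n))\<^sup>2) summable_on UNIV" and inj: "inj_on g S"
  shows "(l2norm (\<lambda>m. if m \<in> S then c * f (g m) else 0))\<^sup>2 \<le> (cmod c)\<^sup>2 * (l2norm f)\<^sup>2"
proof -
  have "(l2norm (\<lambda>m. if m \<in> S then c * f (g m) else 0))\<^sup>2 =
      infsum (\<lambda>m. (cmod c)\<^sup>2 * ((\<lambda>n. (cmod (f n))\<^sup>2) \<circ> g) m) S"
    unfolding l2norm_sq by (rule infsum_cong_neutral) (simp_all add: norm_mult power_mult_distrib)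
  also have "\<dots> = (cmod c)\<^sup>2 * infsum (\<lambda>n. (cmod (f n))\<^sup>2) (g ` S)"
    by (simp only: infsum_cmult_right' infsum_reindex[OF inj])
  also have "\<dots> \<le> (cmod c)\<^sup>2 * infsum (\<lambda>n. (cmod (f n))\<^sup>2) UNIV"
    by (intro mult_left_mono infsum_mono2[OF summable_on_subset[OF f] f]) auto
  finally show ?thesis by (simp add: l2norm_sq)
qed

lemma inj_on_override_on_assigns: "inj_on (\<lambda>r. override_on r b Y) (assigns ty zr (W - Y))"
proof
  fix r r' assume a: "r \<in> assigns ty zr (W - Y)" "r' \<in> assigns ty zr (W - Y)"
    "override_on r b Y = override_on r' b Y"
  show "r = r'"
  proof
    fix v
    show "r v = r' v"
      using a fun_cong[OF a(3), of v] unfolding override_on_def assigns_def by (cases "v \<in> Y") auto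
  qed
qed

text \<open>If \<psi> b0 \<noteq> 0, a vector f of factor_vecs equals \<psi> \<otimes> h where h reads off f on the
  fibre through b0 and divides by \<psi> b0.\<close>
lemma factor_vecs_tensor:
  assumes Y: "Y \<subseteq> W" and psi: "\<psi> \<in> ell2 ty zr Y" and types: "\<forall>v. zr v \<in> ty v"
    and f: "f \<in> factor_vecs ty zr W Y \<psi>" and b0: "\<psi> b0 \<noteq> 0"
  shows "\<exists>h\<in>ell2 ty zr (W - Y). f = tensor_vec ty zr Y (W - Y) (\<lambda>m. 1 * \<psi> m) h"
proof -
  have fe: "f \<in> ell2 ty zr W" using f unfolding factor_vecs_def by blast
  have UW: "Y \<union> (W - Y) = W" using Y by blast
  have b0a: "b0 \<in> assigns ty zr Y" using ell2_supp[OF psi b0] .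
  define h where "h r = (if r \<in> assigns ty zr (W - Y) then inverse (\<psi> b0) * f (override_on r b0 Y) else 0)" for r
  have "h \<in> ell2 ty zr (W - Y)"
    unfolding h_def by (rule ell2_restrict_reindex[OF fe order_refl inj_on_override_on_assigns])
  moreover have "f m = tensor_vec ty zr Y (W - Y) (\<lambda>m. 1 * \<psi> m) h m" for m
  proof (cases "m \<in> assigns ty zr W")
    case False
    then have "f m = 0" using ell2_supp[OF fe] by blast
    then show ?thesis using False UW unfolding tensor_vec_def by simp
  next
    case True
    have ra: "restr zr (W - Y) m \<in> assigns ty zr (W - Y)" by (rule restr_in_assigns[OF True]) auto
    define m' where "m' = override_on (restr zr (W - Y) m) b0 Y"
    have m'a: "m' \<in> assigns ty zr W"
      using True b0a Y types unfolding m'_def override_on_def restr_def assigns_def by auto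
    have "agree_off ty zr W Y m m'"
      using True m'a unfolding agree_off_def m'_def override_on_def restr_def assigns_def by auto
    moreover have "restr zr Y m' = b0"
      using b0a unfolding m'_def override_on_def restr_def assigns_def by (auto simp: fun_eq_iff)
    moreover have "\<forall>m m'. agree_off ty zr W Y m m' \<longrightarrow>
        f m * \<psi> (restr zr Y m') = f m' * \<psi> (restr zr Y m)"
      using f unfolding factor_vecs_def by blast
    ultimately have "f m * \<psi> b0 = f m' * \<psi> (restr zr Y m)" by metis
    then have "f m = \<psi> (restr zr Y m) * (inverse (\<psi> b0) * f m')"
      using b0 by (simp add: field_simps)
    moreover have "h (restr zr (W - Y) m) = inverse (\<psi> b0) * f m'"
      using ra unfolding h_def m'_def by simp
    ultimately show ?thesis using True UW unfolding tensor_vec_def by simp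
  qed
  ultimately show ?thesis by blast
qed

lemma eqq_eq_factor_vecs:
  assumes Y: "Y \<subseteq> W" and psi: "\<psi> \<in> ell2 ty zr Y" and types: "\<forall>v. zr v \<in> ty v"
  shows "eqq ty zr W Y \<psi> = factor_vecs ty zr W Y \<psi>"
proof
  show "eqq ty zr W Y \<psi> \<subseteq> factor_vecs ty zr W Y \<psi>"
    unfolding eqq_def by (rule cspan_factor_vecs) (use tensor_vec_in_factor_vecs[OF Y psi] in blast)
  show "factor_vecs ty zr W Y \<psi> \<subseteq> eqq ty zr W Y \<psi>"
  proof
    fix f assume f: "f \<in> factor_vecs ty zr W Y \<psi>"
    then have fe: "f \<in> ell2 ty zr W" unfolding factor_vecs_def by blast
    let ?S = "{tensor_vec ty zr Y (W - Y) (\<lambda>m. c * \<psi> m) g |c g. g \<in> ell2 ty zr (W - Y)}"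
    show "f \<in> eqq ty zr W Y \<psi>"
    proof (cases "\<psi> = (\<lambda>_. 0)")
      case True
      then have "f = (\<lambda>_. 0)" using f unfolding factor_vecs_def by blast
      moreover have "(\<lambda>_. 0) \<in> fspan ?S"
        unfolding fspan_def by (rule CollectI, rule exI[of _ "{}"]) auto
      ultimately show ?thesis unfolding eqq_def cspan_def using fe by force
    next
      case False
      then obtain b0 where "\<psi> b0 \<noteq> 0" by auto
      then have "f \<in> ?S" using factor_vecs_tensor[OF Y psi types f] by blast
      then show ?thesis unfolding eqq_def by (rule in_cspan[OF fe])
    qed
  qed
qed

section \<open>Density operators factoring through \<psi>\<close>

definition factor_op :: "('v \<Rightarrow> 'a set) \<Rightarrow> ('v \<Rightarrow> 'a) \<Rightarrow> 'v set \<Rightarrow> 'v set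
    \<Rightarrow> (('v \<Rightarrow> 'a) \<Rightarrow> complex) \<Rightarrow> (('v \<Rightarrow> 'a) \<Rightarrow> ('v \<Rightarrow> 'a) \<Rightarrow> complex) \<Rightarrow> bool" where
  "factor_op ty zr W Y \<psi> \<rho> \<longleftrightarrow>
     (\<forall>m m' p. agree_off ty zr W Y m m' \<longrightarrow> \<rho> m p * \<psi> (restr zr Y m') = \<rho> m' p * \<psi> (restr zr Y m)) \<and>
     (\<psi> = (\<lambda>_. 0) \<longrightarrow> (\<forall>m p. \<rho> m p = 0))"

lemma decomp_sums: "decomp ty zr W \<rho> \<theta> \<Longrightarrow> (\<lambda>i. \<theta> i m * cnj (\<theta> i p)) sums \<rho> m p"
  unfolding decomp_def by blast

lemma decomp_ell2: "decomp ty zr W \<rho> \<theta> \<Longrightarrow> \<theta> i \<in> ell2 ty zr W"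
  unfolding decomp_def by blast

lemma decomp_mono: "decomp ty zr X \<rho> \<theta> \<Longrightarrow> X \<subseteq> W \<Longrightarrow> \<forall>v. zr v \<in> ty v \<Longrightarrow> decomp ty zr W \<rho> \<theta>"
  using ell2_mono unfolding decomp_def by blast

lemma is_mixed_mono: "is_mixed ty zr X \<rho> \<Longrightarrow> X \<subseteq> W \<Longrightarrow> \<forall>v. zr v \<in> ty v \<Longrightarrow> is_mixed ty zr W \<rho>"
  unfolding is_mixed_def using decomp_mono by blast

lemma is_mixed_supported:
  assumes "is_mixed ty zr W \<rho>" "\<rho> m p \<noteq> 0"
  shows "m \<in> assigns ty zr W \<and> p \<in> assigns ty zr W"
proof (rule ccontr)
  obtain \<theta> where dec: "decomp ty zr W \<rho> \<theta>" using assms(1) unfolding is_mixed_def by blast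
  assume "\<not> ?thesis"
  then have z: "\<theta> i m * cnj (\<theta> i p) = 0" for i
    using ell2_supp[OF decomp_ell2[OF dec]] by (metis complex_cnj_zero_iff mult_eq_0_iff)
  have "(\<lambda>i. \<theta> i m * cnj (\<theta> i p)) sums 0" unfolding z by (rule sums_zero)
  then show False using decomp_sums[OF dec, of m p] assms(2) sums_unique2 by blast
qed

lemma sums_mult_cnj_eq_0:
  fixes l :: "nat \<Rightarrow> complex"
  assumes "(\<lambda>i. l i * cnj (l i)) sums 0"
  shows "l i = 0"
proof -
  have "(\<lambda>i. l i * cnj (l i)) = (\<lambda>i. complex_of_real ((cmod (l i))\<^sup>2))"
    by (intro ext) (rule complex_norm_square[symmetric])
  with assms have s: "(\<lambda>i. (cmod (l i))\<^sup>2) sums 0"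
    by (metis of_real_0 sums_of_real_iff)
  then have "\<forall>n. (cmod (l n))\<^sup>2 = 0"
    using suminf_eq_zero_iff[OF sums_summable[OF s]] sums_unique[OF s] by simp
  then show ?thesis by simp
qed

lemma factor_op_of_decomp:
  assumes dec: "decomp ty zr W \<rho> \<theta>" and P: "\<And>i. \<theta> i \<in> factor_vecs ty zr W Y \<psi>"
  shows "factor_op ty zr W Y \<psi> \<rho>"
proof -
  have "\<rho> m p * \<psi> (restr zr Y m') = \<rho> m' p * \<psi> (restr zr Y m)"
    if "agree_off ty zr W Y m m'" for m m' p
  proof -
    have "\<theta> i m * \<psi> (restr zr Y m') = \<theta> i m' * \<psi> (restr zr Y m)" for i
      using P that unfolding factor_vecs_def by blast
    then have eq: "\<theta> i m * cnj (\<theta> i p) * \<psi> (restr zr Y m') = \<theta> i m' * cnj (\<theta> i p) * \<psi> (restr zr Y m)" for i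
      by (metis mult.commute mult.left_commute)
    have "(\<lambda>i. \<theta> i m' * cnj (\<theta> i p) * \<psi> (restr zr Y m)) sums (\<rho> m p * \<psi> (restr zr Y m'))"
      using sums_mult2[OF decomp_sums[OF dec], of m p "\<psi> (restr zr Y m')"] unfolding eq .
    then show ?thesis
      using sums_mult2[OF decomp_sums[OF dec], of m' p "\<psi> (restr zr Y m)"] sums_unique2 by blast
  qed
  moreover have "\<rho> m p = 0" if "\<psi> = (\<lambda>_. 0)" for m p
  proof -
    have "\<theta> i = (\<lambda>_. 0)" for i using P that unfolding factor_vecs_def by blast
    then have "(\<lambda>i. \<theta> i m * cnj (\<theta> i p)) sums 0" by simp
    then show ?thesis using decomp_sums[OF dec] sums_unique2 by blast
  qed
  ultimately show ?thesis unfolding factor_op_def by blast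
qed

text \<open>With l i = \<theta> i m * \<psi> m'_Y - \<theta> i m' * \<psi> m_Y, the cross-ratio condition on \<rho> makes the
  series of the squared moduli of l i sum to 0.\<close>
lemma decomp_in_factor_vecs:
  assumes dec: "decomp ty zr W \<rho> \<theta>" and R: "factor_op ty zr W Y \<psi> \<rho>"
  shows "\<theta> i \<in> factor_vecs ty zr W Y \<psi>"
proof -
  have "\<theta> i m * \<psi> (restr zr Y m') = \<theta> i m' * \<psi> (restr zr Y m)"
    if ag: "agree_off ty zr W Y m m'" for m m'
  proof -
    define a where "a = \<psi> (restr zr Y m)"
    define b where "b = \<psi> (restr zr Y m')"
    define l where "l j = \<theta> j m * b - \<theta> j m' * a" for j
    have r1: "\<rho> m m * b = \<rho> m' m * a" and r2: "\<rho> m m' * b = \<rho> m' m' * a"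
      using R ag unfolding factor_op_def a_def b_def by blast+
    have "l j * cnj (l j) = \<theta> j m * cnj (\<theta> j m) * (b * cnj b) - \<theta> j m * cnj (\<theta> j m') * (b * cnj a)
       - (\<theta> j m' * cnj (\<theta> j m) * (a * cnj b) - \<theta> j m' * cnj (\<theta> j m') * (a * cnj a))" for j
      unfolding l_def by (simp add: algebra_simps)
    then have "(\<lambda>j. l j * cnj (l j)) sums (\<rho> m m * (b * cnj b) - \<rho> m m' * (b * cnj a)
        - (\<rho> m' m * (a * cnj b) - \<rho> m' m' * (a * cnj a)))"
      by (simp only:) (intro sums_diff sums_mult2 decomp_sums[OF dec])
    moreover have "\<rho> m m * (b * cnj b) = \<rho> m' m * (a * cnj b)"
      "\<rho> m m' * (b * cnj a) = \<rho> m' m' * (a * cnj a)"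
      using r1 r2 by (metis mult.assoc)+
    ultimately have "(\<lambda>j. l j * cnj (l j)) sums 0" by simp
    then have "l i = 0" by (rule sums_mult_cnj_eq_0)
    then show ?thesis unfolding l_def a_def b_def by simp
  qed
  moreover have "\<theta> i = (\<lambda>_. 0)" if "\<psi> = (\<lambda>_. 0)"
  proof
    fix m
    have "\<rho> m m = 0" using R that unfolding factor_op_def by blast
    then show "\<theta> i m = 0" using decomp_sums[OF dec, of m m] by (intro sums_mult_cnj_eq_0) simp
  qed
  ultimately show ?thesis
    unfolding factor_vecs_def using decomp_ell2[OF dec] by blast
qed

lemma factor_op_iff_decomp:
  assumes dec: "decomp ty zr W \<rho> \<theta>"
  shows "factor_op ty zr W Y \<psi> \<rho> \<longleftrightarrow> (\<forall>i. \<theta> i \<in> factor_vecs ty zr W Y \<psi>)"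
  using factor_op_of_decomp[OF dec] decomp_in_factor_vecs[OF dec] by blast

lemma supp_subset_eqq_iff:
  assumes mix: "is_mixed ty zr W \<rho>" and Y: "Y \<subseteq> W" and psi: "\<psi> \<in> ell2 ty zr Y"
    and types: "\<forall>v. zr v \<in> ty v"
  shows "supp ty zr W \<rho> \<subseteq> eqq ty zr W Y \<psi> \<longleftrightarrow> factor_op ty zr W Y \<psi> \<rho>"
proof -
  define \<theta> where "\<theta> = (SOME \<theta>. decomp ty zr W \<rho> \<theta>)"
  have dec: "decomp ty zr W \<rho> \<theta>"
    unfolding \<theta>_def using mix unfolding is_mixed_def by (rule someI_ex)
  have supp_eq: "supp ty zr W \<rho> = cspan ty zr W (range \<theta>)"
    unfolding supp_def \<theta>_def ..
  have "range \<theta> \<subseteq> supp ty zr W \<rho>"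
    unfolding supp_eq using in_cspan[OF decomp_ell2[OF dec]] by blast
  show ?thesis
    unfolding eqq_eq_factor_vecs[OF Y psi types] factor_op_iff_decomp[OF dec]
  proof
    assume "supp ty zr W \<rho> \<subseteq> factor_vecs ty zr W Y \<psi>"
    then show "\<forall>i. \<theta> i \<in> factor_vecs ty zr W Y \<psi>"
      using \<open>range \<theta> \<subseteq> supp ty zr W \<rho>\<close> by blast
  next
    assume "\<forall>i. \<theta> i \<in> factor_vecs ty zr W Y \<psi>"
    then have "range \<theta> \<subseteq> factor_vecs ty zr W Y \<psi>" by blast
    then show "supp ty zr W \<rho> \<subseteq> factor_vecs ty zr W Y \<psi>"
      unfolding supp_eq by (rule cspan_factor_vecs)
  qed
qed

lemma ptrace_eq:
  "ptrace ty zr X W \<rho> m p = (if m \<in> assigns ty zr X \<and> p \<in> assigns ty zr X then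
     infsum (\<lambda>n. \<rho> (override_on m n W) (override_on p n W)) (assigns ty zr W) else 0)"
  unfolding ptrace_def override_on_def by simp

lemma factor_op_ptrace:
  assumes R: "factor_op ty zr (X \<union> W) Y \<psi> \<rho>" and disj: "X \<inter> W = {}" and Y: "Y \<subseteq> X"
  shows "factor_op ty zr X Y \<psi> (ptrace ty zr X W \<rho>)"
proof -
  have "ptrace ty zr X W \<rho> m p * \<psi> (restr zr Y m') = ptrace ty zr X W \<rho> m' p * \<psi> (restr zr Y m)"
    if ag: "agree_off ty zr X Y m m'" for m m' p
  proof (cases "p \<in> assigns ty zr X")
    case False then show ?thesis by (simp add: ptrace_eq)
  next
    case True
    have ma: "m \<in> assigns ty zr X" "m' \<in> assigns ty zr X" using ag unfolding agree_off_def by auto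
    have ry: "restr zr Y (override_on q n W) = restr zr Y q" for n q
      using disj Y unfolding restr_def override_on_def by (auto simp: fun_eq_iff)
    have "\<rho> (override_on m n W) (override_on p n W) * \<psi> (restr zr Y m') =
          \<rho> (override_on m' n W) (override_on p n W) * \<psi> (restr zr Y m)"
      if n: "n \<in> assigns ty zr W" for n
    proof -
      have "override_on q n W \<in> assigns ty zr (X \<union> W)" if "q \<in> assigns ty zr X" for q
        using n that unfolding assigns_def override_on_def by auto
      then have "agree_off ty zr (X \<union> W) Y (override_on m n W) (override_on m' n W)"
        using ma ag unfolding agree_off_def override_on_def by auto
      then have "\<rho> (override_on m n W) (override_on p n W) * \<psi> (restr zr Y (override_on m' n W)) =
          \<rho> (override_on m' n W) (override_on p n W) * \<psi> (restr zr Y (override_on m n W))"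
        using R unfolding factor_op_def by blast
      then show ?thesis unfolding ry .
    qed
    then have "infsum (\<lambda>n. \<rho> (override_on m n W) (override_on p n W) * \<psi> (restr zr Y m')) (assigns ty zr W) =
        infsum (\<lambda>n. \<rho> (override_on m' n W) (override_on p n W) * \<psi> (restr zr Y m)) (assigns ty zr W)"
      by (rule infsum_cong)
    then show ?thesis
      using ma True by (simp add: ptrace_eq infsum_cmult_left')
  qed
  moreover have "ptrace ty zr X W \<rho> m p = 0" if "\<psi> = (\<lambda>_. 0)" for m p
    using R that unfolding factor_op_def by (simp add: ptrace_eq)
  ultimately show ?thesis unfolding factor_op_def by blast
qed

lemma ptrace_of_supported:
  assumes supp: "\<And>m p. \<rho> m p \<noteq> 0 \<Longrightarrow> m \<in> assigns ty zr X \<and> p \<in> assigns ty zr X"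
    and disj: "X \<inter> W = {}" and types: "\<forall>v. zr v \<in> ty v"
  shows "ptrace ty zr X W \<rho> = \<rho>"
proof (intro ext)
  fix m p
  show "ptrace ty zr X W \<rho> m p = \<rho> m p"
  proof (cases "m \<in> assigns ty zr X \<and> p \<in> assigns ty zr X")
    case False then show ?thesis using supp by (auto simp: ptrace_eq)
  next
    case True
    have "zr \<in> assigns ty zr W" using types unfolding assigns_def by auto
    have "\<rho> (override_on m n W) (override_on p n W) = 0" if "n \<in> assigns ty zr W - {zr}" for n
    proof -
      have "n \<noteq> zr" using that by blast
      then obtain v where v: "n v \<noteq> zr v" by (meson ext)
      then have "v \<in> W" using that unfolding assigns_def by auto
      then have "override_on m n W \<notin> assigns ty zr X"
        using v disj unfolding override_on_def assigns_def by auto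
      then show ?thesis using supp by blast
    qed
    then have "infsum (\<lambda>n. \<rho> (override_on m n W) (override_on p n W)) (assigns ty zr W)
        = infsum (\<lambda>n. \<rho> (override_on m n W) (override_on p n W)) {zr}"
      by (intro infsum_cong_neutral) (use \<open>zr \<in> assigns ty zr W\<close> in auto)
    also have "\<dots> = \<rho> m p"
    proof -
      have "override_on q zr W = q" if "q \<in> assigns ty zr X" for q
        using that disj unfolding override_on_def assigns_def by (auto simp: fun_eq_iff)
      then show ?thesis using True by simp
    qed
    finally show ?thesis using True by (simp add: ptrace_eq)
  qed
qed

lemma factor_op_mono:
  assumes R: "factor_op ty zr W Y \<psi> \<sigma>"
    and supp: "\<And>m p. \<sigma> m p \<noteq> 0 \<Longrightarrow> m \<in> assigns ty zr W \<and> p \<in> assigns ty zr W"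
    and Y: "Y \<subseteq> W" and WV: "W \<subseteq> V"
  shows "factor_op ty zr V Y \<psi> \<sigma>"
proof -
  have "\<sigma> m p * \<psi> (restr zr Y m') = \<sigma> m' p * \<psi> (restr zr Y m)"
    if ag: "agree_off ty zr V Y m m'" for m m' p
  proof -
    have oth: "\<And>v. v \<notin> Y \<Longrightarrow> m v = m' v" using ag unfolding agree_off_def by auto
    have "q' \<in> assigns ty zr W"
      if "q \<in> assigns ty zr W" "q' \<in> assigns ty zr V" "\<forall>v. v \<notin> Y \<longrightarrow> q v = q' v" for q q'
      using that Y WV unfolding assigns_def by auto
    then have "m \<in> assigns ty zr W \<longleftrightarrow> m' \<in> assigns ty zr W"
      using ag unfolding agree_off_def by (metis (full_types))
    show ?thesis
    proof (cases "m \<in> assigns ty zr W")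
      case True
      then have "agree_off ty zr W Y m m'"
        using \<open>m \<in> assigns ty zr W \<longleftrightarrow> m' \<in> assigns ty zr W\<close> oth unfolding agree_off_def by blast
      then show ?thesis using R unfolding factor_op_def by blast
    next
      case False
      then have "\<sigma> m p = 0" "\<sigma> m' p = 0"
        using supp \<open>m \<in> assigns ty zr W \<longleftrightarrow> m' \<in> assigns ty zr W\<close> by blast+
      then show ?thesis by simp
    qed
  qed
  then show ?thesis using R unfolding factor_op_def by blast
qed

lemma decomp_zero: "decomp ty zr W (\<lambda>_ _. 0) (\<lambda>_ _. 0)"
  unfolding decomp_def by (simp add: ell2_zero)

lemma is_mixed_zero: "is_mixed ty zr W (\<lambda>_ _. 0)"
  unfolding is_mixed_def using decomp_zero by blast

lemma is_mixed_proj0: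
  assumes types: "\<forall>v. zr v \<in> ty v"
  shows "is_mixed ty zr W (proj0 zr)"
proof -
  define \<theta> where "\<theta> = (\<lambda>(i::nat) m. if i = 0 \<and> m = zr then 1 else (0::complex))"
  have zra: "zr \<in> assigns ty zr W" using types unfolding assigns_def by auto
  have "(\<lambda>m. (cmod (\<theta> i m))\<^sup>2) summable_on UNIV" for i
  proof -
    have "(\<lambda>m. (cmod (\<theta> i m))\<^sup>2) summable_on {zr}" by simp
    then show ?thesis
      by (rule summable_on_cong_neutral[where S = "{zr}" and T = UNIV, THEN iffD1, rotated -1])
        (auto simp: \<theta>_def)
  qed
  then have "\<theta> i \<in> ell2 ty zr W" for i
    unfolding ell2_def using zra by (auto simp: \<theta>_def)
  moreover have "(\<lambda>i. (l2norm (\<theta> i))\<^sup>2) = (\<lambda>i. if i = 0 then (l2norm (\<theta> 0))\<^sup>2 else 0)"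
    by (intro ext) (simp add: \<theta>_def)
  then have "summable (\<lambda>i. (l2norm (\<theta> i))\<^sup>2)"
    by (simp only:) (rule sums_summable[OF sums_single])
  moreover have "(\<lambda>i. \<theta> i m * cnj (\<theta> i p)) = (\<lambda>i. if i = 0 then proj0 zr m p else 0)" for m p
    by (auto simp: \<theta>_def proj0_def)
  then have "(\<lambda>i. \<theta> i m * cnj (\<theta> i p)) sums proj0 zr m p" for m p
    by (simp only:) (rule sums_single)
  ultimately show ?thesis unfolding is_mixed_def decomp_def by blast
qed

text \<open>A state supported on A is the product state \<rho> \<otimes> |0\<rangle>\<langle>0| over A \<union> U.\<close>
lemma separable_of_supported:
  assumes mix: "is_mixed ty zr A \<rho>"
    and disj: "A \<inter> U = {}" and types: "\<forall>v. zr v \<in> ty v"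
  shows "separable ty zr A U \<rho>"
proof -
  define r1 where "r1 i = (if i = (0::nat) then \<rho> else (\<lambda>_ _. 0))" for i
  define r2 where "r2 i = (if i = (0::nat) then proj0 zr else (\<lambda>_ _. 0))" for i
  have "is_mixed ty zr A (r1 i) \<and> is_mixed ty zr U (r2 i)" for i
    using mix is_mixed_proj0[OF types] is_mixed_zero unfolding r1_def r2_def by auto
  moreover have tensor_proj0: "tensor_op ty zr A U \<rho> (proj0 zr) m p = \<rho> m p" for m p
  proof (cases "m \<in> assigns ty zr (A \<union> U) \<and> p \<in> assigns ty zr (A \<union> U) \<and>
      restr zr U m = zr \<and> restr zr U p = zr")
    case True
    have "restr zr A q = q" if "q = m \<or> q = p" for q
    proof
      fix v
      have "q \<in> assigns ty zr (A \<union> U)" "restr zr U q v = zr v" using True that by auto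
      then show "restr zr A q v = q v" unfolding assigns_def restr_def by (auto split: if_splits)
    qed
    then show ?thesis using True unfolding tensor_op_def proj0_def by simp
  next
    case False
    have "m \<notin> assigns ty zr A \<or> p \<notin> assigns ty zr A"
    proof (rule ccontr)
      assume mp: "\<not> ?thesis"
      then have "m \<in> assigns ty zr (A \<union> U) \<and> p \<in> assigns ty zr (A \<union> U)"
        using assigns_mono[of A "A \<union> U" zr ty] types by blast
      moreover have "restr zr U q = zr" if "q \<in> assigns ty zr A" for q
        using that disj unfolding assigns_def restr_def by (auto simp: fun_eq_iff)
      ultimately show False using False mp by blast
    qed
    then have "\<rho> m p = 0" using is_mixed_supported[OF mix] by blast
    then show ?thesis using False unfolding tensor_op_def proj0_def by auto
  qed
  moreover have "tensor_op ty zr A U (\<lambda>_ _. 0) (\<lambda>_ _. 0) = (\<lambda>_ _. 0)"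
    unfolding tensor_op_def by (intro ext) simp
  then have "(\<lambda>i. tensor_op ty zr A U (r1 i) (r2 i) m p) = (\<lambda>i. if i = 0 then \<rho> m p else 0)" for m p
    by (intro ext) (simp add: r1_def r2_def tensor_proj0)
  then have "(\<lambda>i. tensor_op ty zr A U (r1 i) (r2 i) m p) sums \<rho> m p" for m p
    by (simp only:) (rule sums_single)
  ultimately show ?thesis unfolding separable_def by blast
qed

lemma factor_op_of_sat:
  assumes pre: "sat ty zr X E U \<rho> (eqq ty zr (X \<union> E \<union> U) Y \<psi>)"
    and Y: "Y \<subseteq> X" and disj: "X \<inter> (E \<union> U) = {}"
    and psi: "\<psi> \<in> ell2 ty zr Y" and types: "\<forall>v. zr v \<in> ty v"
  shows "factor_op ty zr X Y \<psi> \<rho>"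
proof -
  obtain \<rho>0 where r0: "is_mixed ty zr (X \<union> E \<union> U) \<rho>0" "supp ty zr (X \<union> E \<union> U) \<rho>0 \<subseteq> eqq ty zr (X \<union> E \<union> U) Y \<psi>"
      "ptrace ty zr X (E \<union> U) \<rho>0 = \<rho>"
    using pre unfolding sat_def by blast
  have "Y \<subseteq> X \<union> E \<union> U" using Y by blast
  then have "factor_op ty zr (X \<union> E \<union> U) Y \<psi> \<rho>0"
    using r0(2) supp_subset_eqq_iff[OF r0(1) _ psi types] by blast
  then have "factor_op ty zr (X \<union> (E \<union> U)) Y \<psi> \<rho>0" by (simp only: Un_assoc)
  from factor_op_ptrace[OF this disj Y] show ?thesis unfolding r0(3) .
qed

lemma sat_eqq_of_factor_op:
  assumes mix: "is_mixed ty zr X \<sigma>" and R: "factor_op ty zr X Y \<psi> \<sigma>"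
    and Y: "Y \<subseteq> X" and kinds: "X \<inter> E = {}" "X \<inter> U = {}" "E \<inter> U = {}"
    and psi: "\<psi> \<in> ell2 ty zr Y" and types: "\<forall>v. zr v \<in> ty v"
  shows "sat ty zr X E U \<sigma> (eqq ty zr (X \<union> E \<union> U) Y \<psi>)"
proof -
  let ?V = "X \<union> E \<union> U"
  have mixV: "is_mixed ty zr ?V \<sigma>" by (rule is_mixed_mono[OF mix _ types]) auto
  have "factor_op ty zr ?V Y \<psi> \<sigma>"
    by (rule factor_op_mono[OF R is_mixed_supported[OF mix] Y]) auto
  moreover have "Y \<subseteq> ?V" using Y by blast
  ultimately have "supp ty zr ?V \<sigma> \<subseteq> eqq ty zr ?V Y \<psi>"
    using supp_subset_eqq_iff[OF mixV _ psi types] by blast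
  moreover have "separable ty zr (X \<union> E) U \<sigma>"
  proof (rule separable_of_supported[OF is_mixed_mono[OF mix] _ types])
    show "X \<subseteq> X \<union> E" "(X \<union> E) \<inter> U = {}" using kinds by auto
  qed (rule types)
  moreover have "ptrace ty zr X (E \<union> U) \<sigma> = \<sigma>"
  proof (rule ptrace_of_supported[OF _ _ types])
    show "X \<inter> (E \<union> U) = {}" using kinds by auto
  qed (rule is_mixed_supported[OF mix])
  ultimately show ?thesis unfolding sat_def using mixV by blast
qed

section \<open>Sums of mixed memories\<close>

lemma decomp_abs_summable:
  assumes dec: "decomp ty zr W \<rho> \<theta>"
  shows "summable (\<lambda>i. cmod (\<theta> i m * cnj (\<theta> i p)))"
proof -
  have sl: "summable (\<lambda>i. (l2norm (\<theta> i))\<^sup>2)" using dec unfolding decomp_def by blast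
  have sq: "summable (\<lambda>i. (cmod (\<theta> i q))\<^sup>2)" for q
  proof (rule summable_comparison_test'[OF sl])
    fix i :: nat
    have "cmod (\<theta> i q) \<le> l2norm (\<theta> i)"
      by (rule norm_le_l2norm[OF ell2_sq_summable[OF decomp_ell2[OF dec]]])
    then show "norm ((cmod (\<theta> i q))\<^sup>2) \<le> (l2norm (\<theta> i))\<^sup>2" by (simp add: power_mono)
  qed
  show ?thesis
  proof (rule summable_comparison_test'[OF summable_add[OF sq[of m] sq[of p]]])
    fix i :: nat
    have "2 * cmod (\<theta> i m) * cmod (\<theta> i p) \<le> (cmod (\<theta> i m))\<^sup>2 + (cmod (\<theta> i p))\<^sup>2"
      by (rule sum_squares_bound)
    moreover have "0 \<le> cmod (\<theta> i m) * cmod (\<theta> i p)" by simp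
    moreover have "norm (cmod (\<theta> i m * cnj (\<theta> i p))) = cmod (\<theta> i m) * cmod (\<theta> i p)"
      by (simp add: norm_mult)
    ultimately show "norm (cmod (\<theta> i m * cnj (\<theta> i p))) \<le> (cmod (\<theta> i m))\<^sup>2 + (cmod (\<theta> i p))\<^sup>2"
      by linarith
  qed
qed

lemma has_sum_interleave:
  fixes f :: "nat \<Rightarrow> 'b::banach"
  assumes N: "N > 0"
    and sm: "\<And>t. t < N \<Longrightarrow> summable (\<lambda>i. norm (f (i * N + t)))"
    and su: "\<And>t. t < N \<Longrightarrow> (\<lambda>i. f (i * N + t)) sums s t"
  shows "(f has_sum (\<Sum>t<N. s t)) UNIV"
proof -
  define R where "R t = range (\<lambda>i. i * N + t)" for t
  have ht: "(f has_sum s t) (R t)" if "t < N" for t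
  proof -
    have "((\<lambda>i. f (i * N + t)) has_sum s t) UNIV"
      by (rule norm_summable_imp_has_sum[OF sm[OF that] su[OF that]])
    moreover have "inj (\<lambda>i. i * N + t)" using N by (intro injI) simp
    ultimately show ?thesis unfolding R_def using has_sum_reindex[of "\<lambda>i. i * N + t" UNIV f]
      by (simp add: o_def)
  qed
  have ind: "(f has_sum (\<Sum>t<n. s t)) (\<Union>t<n. R t)" if "n \<le> N" for n
    using that
  proof (induction n)
    case (Suc n)
    have "j mod N = n" if "j \<in> R n" for j using that Suc.prems unfolding R_def by auto
    moreover have "j mod N < n" if "j \<in> (\<Union>t<n. R t)" for j using that Suc.prems unfolding R_def by auto
    ultimately have "R n \<inter> (\<Union>t<n. R t) = {}" by fastforce
    then have "(f has_sum (s n + (\<Sum>t<n. s t))) (R n \<union> (\<Union>t<n. R t))"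
      using ht Suc by (intro has_sum_Un_disjoint) auto
    moreover have "R n \<union> (\<Union>t<n. R t) = (\<Union>t<Suc n. R t)" by (auto simp: lessThan_Suc)
    ultimately show ?case by (simp add: add.commute)
  qed simp
  have "j \<in> R (j mod N)" for j
    unfolding R_def by (rule image_eqI[of _ _ "j div N"]) simp_all
  then have "(\<Union>t<N. R t) = UNIV" using N by (auto intro: mod_less_divisor)
  then show ?thesis using ind[of N] by simp
qed

text \<open>Interleaving the decompositions of the summands, decomposition j uses summand j mod N.\<close>
lemma is_mixed_sum:
  fixes r :: "'t::finite \<Rightarrow> ('v \<Rightarrow> 'a) \<Rightarrow> ('v \<Rightarrow> 'a) \<Rightarrow> complex"
  assumes mix: "\<And>t. is_mixed ty zr W (r t)"
  shows "is_mixed ty zr W (\<lambda>m p. \<Sum>t\<in>UNIV. r t m p)"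
proof -
  have "\<forall>t. \<exists>\<theta>. decomp ty zr W (r t) \<theta>" using mix unfolding is_mixed_def by blast
  then obtain \<theta> where dec: "\<And>t. decomp ty zr W (r t) (\<theta> t)" by metis
  define N where "N = card (UNIV :: 't set)"
  have N: "N > 0" unfolding N_def by (simp add: card_gt_0_iff)
  obtain g where g: "bij_betw g {..<N} (UNIV :: 't set)"
    using ex_bij_betw_nat_finite[of "UNIV :: 't set"] unfolding N_def by (auto simp: atLeast0LessThan)
  define \<eta> where "\<eta> j = \<theta> (g (j mod N)) (j div N)" for j
  have md: "\<eta> (i * N + t) = \<theta> (g t) i" if "t < N" for i t
    using that N unfolding \<eta>_def by simp
  have "((\<lambda>j. norm ((l2norm (\<eta> j))\<^sup>2)) has_sum (\<Sum>t<N. suminf (\<lambda>i. (l2norm (\<theta> (g t) i))\<^sup>2))) UNIV"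
  proof (rule has_sum_interleave[OF N])
    fix t assume t: "t < N"
    have "summable (\<lambda>i. (l2norm (\<theta> (g t) i))\<^sup>2)" using dec unfolding decomp_def by blast
    then show "summable (\<lambda>i. norm (norm ((l2norm (\<eta> (i * N + t)))\<^sup>2)))"
      and "(\<lambda>i. norm ((l2norm (\<eta> (i * N + t)))\<^sup>2)) sums suminf (\<lambda>i. (l2norm (\<theta> (g t) i))\<^sup>2)"
      using summable_sums by (simp_all add: md[OF t])
  qed
  then have "summable (\<lambda>j. (l2norm (\<eta> j))\<^sup>2)"
    using has_sum_imp_sums sums_summable by fastforce
  moreover have "(\<lambda>j. \<eta> j m * cnj (\<eta> j p)) sums (\<Sum>t\<in>UNIV. r t m p)" for m p
  proof -
    have "((\<lambda>j. \<eta> j m * cnj (\<eta> j p)) has_sum (\<Sum>t<N. r (g t) m p)) UNIV"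
    proof (rule has_sum_interleave[OF N])
      fix t assume t: "t < N"
      show "summable (\<lambda>i. norm (\<eta> (i * N + t) m * cnj (\<eta> (i * N + t) p)))"
        using decomp_abs_summable[OF dec[of "g t"], of m p] by (simp add: md[OF t])
      show "(\<lambda>i. \<eta> (i * N + t) m * cnj (\<eta> (i * N + t) p)) sums r (g t) m p"
        using decomp_sums[OF dec[of "g t"], of m p] by (simp add: md[OF t])
    qed
    moreover have "(\<Sum>t<N. r (g t) m p) = (\<Sum>t\<in>UNIV. r t m p)"
      using sum.reindex_bij_betw[OF g, of "\<lambda>t. r t m p"] by simp
    ultimately show ?thesis using has_sum_imp_sums by fastforce
  qed
  moreover have "\<eta> j \<in> ell2 ty zr W" for j
    unfolding \<eta>_def using decomp_ell2[OF dec] .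
  ultimately show ?thesis unfolding is_mixed_def decomp_def by blast
qed

lemma decomp_restrict_reindex:
  assumes dec: "decomp ty zr W \<rho> \<phi>" and S: "S \<subseteq> assigns ty zr W" and inj: "inj_on g S"
  shows "decomp ty zr W (\<lambda>m p. if m \<in> S \<and> p \<in> S then c * cnj c * \<rho> (g m) (g p) else 0)
                         (\<lambda>i m. if m \<in> S then c * \<phi> i (g m) else 0)"
proof -
  define \<eta> where "\<eta> i m = (if m \<in> S then c * \<phi> i (g m) else 0)" for i m
  have ell: "\<eta> i \<in> ell2 ty zr W" for i
    unfolding \<eta>_def by (rule ell2_restrict_reindex[OF decomp_ell2[OF dec] S inj])
  have nb: "(l2norm (\<eta> i))\<^sup>2 \<le> (cmod c)\<^sup>2 * (l2norm (\<phi> i))\<^sup>2" for i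
    unfolding \<eta>_def by (rule l2norm_restrict_reindex_le[OF ell2_sq_summable[OF decomp_ell2[OF dec]] inj])
  have "summable (\<lambda>i. (l2norm (\<phi> i))\<^sup>2)" using dec unfolding decomp_def by blast
  then have "summable (\<lambda>i. (l2norm (\<eta> i))\<^sup>2)"
    by (rule summable_comparison_test'[OF summable_mult[where c = "(cmod c)\<^sup>2"]]) (simp add: nb)
  moreover have "(\<lambda>i. \<eta> i m * cnj (\<eta> i p)) sums
      (if m \<in> S \<and> p \<in> S then c * cnj c * \<rho> (g m) (g p) else 0)" for m p
  proof (cases "m \<in> S \<and> p \<in> S")
    case True
    have "(\<lambda>i. \<eta> i m * cnj (\<eta> i p)) = (\<lambda>i. c * cnj c * (\<phi> i (g m) * cnj (\<phi> i (g p))))"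
      using True unfolding \<eta>_def by (intro ext) (simp add: algebra_simps)
    then show ?thesis using True sums_mult[OF decomp_sums[OF dec]] by simp
  next
    case False
    then have "(\<lambda>i. \<eta> i m * cnj (\<eta> i p)) = (\<lambda>i. 0)" unfolding \<eta>_def by (intro ext) auto
    then show ?thesis using False by (simp only: if_False sums_zero)
  qed
  ultimately show ?thesis unfolding decomp_def \<eta>_def[symmetric] using ell by blast
qed

section \<open>Semantics of apply and init\<close>

lemma sem_apply_graph:
  assumes C1: "\<And>m n n'. lift_op ty zr Xall X K m n \<noteq> 0 \<Longrightarrow> \<rho> n n' \<noteq> 0 \<Longrightarrow> n = f m"
      and C2: "\<And>m n n'. lift_op ty zr Xall X K m n' \<noteq> 0 \<Longrightarrow> \<rho> n n' \<noteq> 0 \<Longrightarrow> n' = f m"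
  shows "sem ty zr Xall (Apply K X) \<rho> m p =
     lift_op ty zr Xall X K m (f m) * (\<rho> (f m) (f p) * cnj (lift_op ty zr Xall X K p (f p)))"
proof -
  let ?L = "lift_op ty zr Xall X K"
  have inner: "infsum (\<lambda>n'. \<rho> n n' * cnj (?L p n')) UNIV = \<rho> n (f p) * cnj (?L p (f p))" for n
  proof -
    have "infsum (\<lambda>n'. \<rho> n n' * cnj (?L p n')) UNIV = infsum (\<lambda>n'. \<rho> n n' * cnj (?L p n')) {f p}"
      by (rule infsum_cong_neutral) (use C2[of p _ n] in auto)
    then show ?thesis by simp
  qed
  have "infsum (\<lambda>n. ?L m n * (\<rho> n (f p) * cnj (?L p (f p)))) UNIV =
      infsum (\<lambda>n. ?L m n * (\<rho> n (f p) * cnj (?L p (f p)))) {f m}"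
    by (rule infsum_cong_neutral) (use C1[of m _ "f p"] in auto)
  then show ?thesis by (simp add: inner Let_def)
qed

lemma lift_op_nonzero:
  assumes "lift_op ty zr Xall X K m n \<noteq> 0"
  shows "m \<in> assigns ty zr Xall" "n \<in> assigns ty zr Xall" "\<And>v. v \<notin> X \<Longrightarrow> m v = n v"
    "K (restr zr X m) (restr zr X n) \<noteq> 0"
  using assms unfolding lift_op_def by (auto split: if_splits)

lemma restr_singleton: "restr zr {v} m = zr(v := m v)"
  unfolding restr_def by (auto simp: fun_eq_iff)

lemma restr_singleton_eq_zr: "restr zr {v} m = zr \<longleftrightarrow> m v = zr v"
  unfolding restr_singleton by (metis fun_upd_idem_iff)

lemma restr_pair_eq:
  assumes "x \<noteq> y"
  shows "restr zr {x, y} q = zr(x := a, y := c) \<longleftrightarrow> q x = a \<and> q y = c"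
proof
  assume h: "restr zr {x, y} q = zr(x := a, y := c)"
  have "restr zr {x, y} q x = (zr(x := a, y := c)) x" "restr zr {x, y} q y = (zr(x := a, y := c)) y"
    using h by simp_all
  then show "q x = a \<and> q y = c" using assms unfolding restr_def by simp
next
  assume "q x = a \<and> q y = c"
  then show "restr zr {x, y} q = zr(x := a, y := c)"
    using assms unfolding restr_def by (auto simp: fun_eq_iff)
qed

lemma fun_upd_in_assigns:
  "m \<in> assigns ty zr Xall \<Longrightarrow> v \<in> Xall \<Longrightarrow> a \<in> ty v \<Longrightarrow> m(v := a) \<in> assigns ty zr Xall"
  unfolding assigns_def by auto

lemma assigns_in_range:
  assumes "bij_betw e UNIV (ty v)" "m \<in> assigns ty zr Xall" "v \<in> Xall"
  obtains k where "m v = e k"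
proof -
  have "m v \<in> ty v" using assms(2,3) unfolding assigns_def by auto
  then show ?thesis using bij_betw_imp_surj_on[OF assms(1)] that by blast
qed

lemma assigns_singleton:
  assumes bij: "bij_betw e UNIV (ty v)"
  shows "assigns ty zr {v} = range (\<lambda>k. zr(v := e k))"
proof
  show "assigns ty zr {v} \<subseteq> range (\<lambda>k. zr(v := e k))"
  proof
    fix n assume n: "n \<in> assigns ty zr {v}"
    then obtain k where "n v = e k" by (rule assigns_in_range[where ty = ty and v = v, OF bij]) simp
    moreover have "n u = zr u" if "u \<noteq> v" for u using n that unfolding assigns_def by simp
    ultimately have "n = zr(v := e k)" by (auto simp: fun_eq_iff)
    then show "n \<in> range (\<lambda>k. zr(v := e k))" by blast
  qed
  show "range (\<lambda>k. zr(v := e k)) \<subseteq> assigns ty zr {v}"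
    using bij_betw_apply[OF bij] unfolding assigns_def by auto
qed

lemma sem_apply_zeroed_var:
  assumes supp0: "\<forall>n n'. \<rho> n n' \<noteq> 0 \<longrightarrow> n v = zr v \<and> n' v = zr v"
    and v: "v \<in> Xall" and types: "\<forall>u. zr u \<in> ty u"
  shows "sem ty zr Xall (Apply K {v}) \<rho> m p =
     (if m \<in> assigns ty zr Xall then K (restr zr {v} m) zr else 0) *
       (\<rho> (m(v := zr v)) (p(v := zr v)) *
        cnj (if p \<in> assigns ty zr Xall then K (restr zr {v} p) zr else 0))"
proof -
  let ?L = "lift_op ty zr Xall {v} K"
  have eqf: "n = m(v := zr v)" if "?L m n \<noteq> 0" "n v = zr v" for m n
    using lift_op_nonzero(3)[OF that(1)] that(2) by (auto simp: fun_eq_iff)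
  have Lval: "?L q (q(v := zr v)) = (if q \<in> assigns ty zr Xall then K (restr zr {v} q) zr else 0)" for q
  proof (cases "q \<in> assigns ty zr Xall")
    case True
    have "q(v := zr v) \<in> assigns ty zr Xall" by (rule fun_upd_in_assigns[OF True v]) (use types in auto)
    moreover have "restr zr {v} (q(v := zr v)) = zr" by (simp add: restr_singleton_eq_zr)
    ultimately show ?thesis using True unfolding lift_op_def by simp
  next
    case False then show ?thesis unfolding lift_op_def by simp
  qed
  have "sem ty zr Xall (Apply K {v}) \<rho> m p =
      ?L m (m(v := zr v)) * (\<rho> (m(v := zr v)) (p(v := zr v)) * cnj (?L p (p(v := zr v))))"
    by (rule sem_apply_graph) (use eqf supp0 in blast)+
  then show ?thesis by (simp only: Lval)
qed

lemma sem_Init: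
  fixes e :: "'b::finite \<Rightarrow> 'a"
  assumes v: "v \<in> Xall" and bij: "bij_betw e UNIV (ty v)" and types: "\<forall>u. zr u \<in> ty u"
  shows "sem ty zr Xall (Init v) \<rho> = (\<lambda>m p. if m \<in> assigns ty zr Xall \<and> p \<in> assigns ty zr Xall \<and>
      m v = zr v \<and> p v = zr v then \<Sum>k\<in>UNIV. \<rho> (m(v := e k)) (p(v := e k)) else 0)"
proof (intro ext)
  fix m p
  let ?A = "assigns ty zr Xall"
  have XU: "(Xall - {v}) \<union> {v} = Xall" using v by blast
  have inj: "inj (\<lambda>k. zr(v := e k))"
    using bij_betw_imp_inj_on[OF bij] by (auto simp: inj_def fun_eq_iff dest: fun_cong[where x = v])
  have pt: "ptrace ty zr (Xall - {v}) {v} \<rho> (restr zr (Xall - {v}) m) (restr zr (Xall - {v}) p) =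
      (\<Sum>k\<in>UNIV. \<rho> (m(v := e k)) (p(v := e k)))" if mp: "m \<in> ?A" "p \<in> ?A"
  proof -
    have ra: "restr zr (Xall - {v}) q \<in> assigns ty zr (Xall - {v})" if "q \<in> ?A" for q
      by (rule restr_in_assigns[OF that]) auto
    have ov: "override_on (restr zr (Xall - {v}) q) (zr(v := e k)) {v} = q(v := e k)" if "q \<in> ?A" for q k
      using that unfolding override_on_def restr_def assigns_def by (auto simp: fun_eq_iff)
    have "ptrace ty zr (Xall - {v}) {v} \<rho> (restr zr (Xall - {v}) m) (restr zr (Xall - {v}) p) =
       infsum (\<lambda>n. \<rho> (override_on (restr zr (Xall - {v}) m) n {v})
                    (override_on (restr zr (Xall - {v}) p) n {v})) (range (\<lambda>k. zr(v := e k)))"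
      using ra[OF mp(1)] ra[OF mp(2)] by (simp add: ptrace_eq assigns_singleton[where ty = ty and v = v, OF bij])
    also have "\<dots> = infsum (\<lambda>k. \<rho> (m(v := e k)) (p(v := e k))) UNIV"
      by (simp add: infsum_reindex[OF inj] o_def ov[OF mp(1)] ov[OF mp(2)])
    finally show ?thesis by simp
  qed
  have "proj0 zr (restr zr {v} m) (restr zr {v} p) = (if m v = zr v \<and> p v = zr v then 1 else 0)"
    unfolding proj0_def by (simp add: restr_singleton_eq_zr)
  then show "sem ty zr Xall (Init v) \<rho> m p = (if m \<in> ?A \<and> p \<in> ?A \<and> m v = zr v \<and> p v = zr v
      then \<Sum>k\<in>UNIV. \<rho> (m(v := e k)) (p(v := e k)) else 0)"
    unfolding sem.simps tensor_op_def XU using pt by auto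
qed

text \<open>X^(k2) Z^(k1) and Z^(k1) X^(k2) both send the basis vector b to a multiple of the basis
  vector pauli_bit k b.\<close>
definition pauli_bit :: "bool \<times> bool \<Rightarrow> bool \<Rightarrow> bool" where
  "pauli_bit k b = (if snd k then \<not> b else b)"

lemma pauli_bit_pauli_bit [simp]: "pauli_bit k (pauli_bit k b) = b"
  by (simp add: pauli_bit_def)

lemma encM_nonzero: "encM k b b' \<noteq> 0 \<Longrightarrow> b' = pauli_bit k b"
  by (cases k; cases "fst k"; cases "snd k"; cases b; cases b')
    (simp_all add: encM_def mmul_def mpow_def Xm_def Zm_def pauli_bit_def UNIV_bool)

lemma decM_nonzero: "decM k b b' \<noteq> 0 \<Longrightarrow> b' = pauli_bit k b"
  by (cases k; cases "fst k"; cases "snd k"; cases b; cases b')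
    (simp_all add: decM_def mmul_def mpow_def Xm_def Zm_def pauli_bit_def UNIV_bool)

lemma decM_encM: "decM k b (pauli_bit k b) * encM k (pauli_bit k b) b = 1"
  by (cases k; cases "fst k"; cases "snd k"; cases b)
    (simp_all add: encM_def decM_def mmul_def mpow_def Xm_def Zm_def pauli_bit_def UNIV_bool)

lemma lift_ctrlK_upd:
  assumes xy: "x \<noteq> y" and injx: "inj ex" and injy: "inj ey"
    and m: "m \<in> assigns ty zr Xall" "m(y := ey b') \<in> assigns ty zr Xall"
    and mx: "m x = ex k" and my: "m y = ey b"
  shows "lift_op ty zr Xall {x, y} (ctrlK zr x y ex ey M) m (m(y := ey b')) = M k b b'"
proof -
  have c: "(restr zr {x, y} m = zr(x := ex k', y := ey b1) \<and>
      restr zr {x, y} (m(y := ey b')) = zr(x := ex k', y := ey b2)) \<longleftrightarrow> (k', b1, b2) = (k, b, b')" for k' b1 b2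
    unfolding restr_pair_eq[OF xy] using xy mx my inj_eq[OF injx] inj_eq[OF injy] by auto
  have "ctrlK zr x y ex ey M (restr zr {x, y} m) (restr zr {x, y} (m(y := ey b'))) =
      (\<Sum>t\<in>UNIV. if t = (k, b, b') then M k b b' else 0)"
    unfolding ctrlK_def by (intro sum.cong refl) (auto simp: c split: prod.split)
  also have "\<dots> = M k b b'" by simp
  finally show ?thesis using m xy unfolding lift_op_def by simp
qed

lemma lift_ctrlK_nonzero:
  assumes xy: "x \<noteq> y" and nz: "lift_op ty zr Xall {x, y} (ctrlK zr x y ex ey M) m n \<noteq> 0"
  obtains k b b' where "m x = ex k" "m y = ey b" "n = m(y := ey b')" "M k b b' \<noteq> 0"
proof -
  have "ctrlK zr x y ex ey M (restr zr {x, y} m) (restr zr {x, y} n) \<noteq> 0"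
    using lift_op_nonzero(4)[OF nz] .
  then obtain t where "(case t of (k, b, b') \<Rightarrow> if restr zr {x, y} m = zr(x := ex k, y := ey b) \<and>
      restr zr {x, y} n = zr(x := ex k, y := ey b') then M k b b' else 0) \<noteq> 0"
    unfolding ctrlK_def by (meson sum.not_neutral_contains_not_neutral)
  then obtain k b b' where h: "restr zr {x, y} m = zr(x := ex k, y := ey b)"
      "restr zr {x, y} n = zr(x := ex k, y := ey b')" "M k b b' \<noteq> 0"
    by (cases t) (auto split: if_splits)
  have "n = m(y := ey b')"
  proof
    fix u
    show "n u = (m(y := ey b')) u"
      using h(1,2) lift_op_nonzero(3)[OF nz, of u] xy unfolding restr_pair_eq[OF xy]
      by (cases "u = x \<or> u = y") auto
  qed
  then show ?thesis using that h(1,3) unfolding restr_pair_eq[OF xy] by blast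
qed

section \<open>Key generation, encryption and decryption\<close>

locale qotp_program =
  fixes ty :: "'v \<Rightarrow> 'a set" and zr :: "'v \<Rightarrow> 'a"
    and Xall :: "'v set" and x y w :: 'v
    and ex ew :: "bool \<times> bool \<Rightarrow> 'a" and ey :: "bool \<Rightarrow> 'a"
    and UK U0 :: "('v \<Rightarrow> 'a) \<Rightarrow> ('v \<Rightarrow> 'a) \<Rightarrow> complex"
  assumes types: "\<forall>v. zr v \<in> ty v"
    and vars: "x \<in> Xall" "y \<in> Xall" "w \<in> Xall"
    and distinct_vars: "x \<noteq> y" "x \<noteq> w" "y \<noteq> w"
    and type_x: "bij_betw ex UNIV (ty x)"
    and type_y: "bij_betw ey UNIV (ty y)"
    and type_w: "bij_betw ew UNIV (ty w)" "ew (False, False) = zr w"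
    and UK: "\<forall>m. UK m zr = (if \<exists>k. m = zr(x := ex k) then 1/2 else 0)"
    and U0: "\<forall>m. U0 m zr = (if m = zr then 1 else 0)"
begin

abbreviation A :: "('v \<Rightarrow> 'a) set" where "A \<equiv> assigns ty zr Xall"

lemma inj_ex: "inj ex" and inj_ey: "inj ey" and inj_ew: "inj ew"
  using bij_betw_imp_inj_on type_x type_y type_w(1) by blast+

lemma upd_x_in_assigns: "m \<in> A \<Longrightarrow> m(x := ex k) \<in> A"
  using vars(1) bij_betw_apply[OF type_x UNIV_I] unfolding assigns_def by auto

lemma upd_y_in_assigns: "m \<in> A \<Longrightarrow> m(y := ey b) \<in> A"
  using vars(2) bij_betw_apply[OF type_y UNIV_I] unfolding assigns_def by auto

lemma upd_w_in_assigns: "m \<in> A \<Longrightarrow> m(w := ew k) \<in> A"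
  using vars(3) bij_betw_apply[OF type_w(1) UNIV_I] unfolding assigns_def by auto

lemma upd_zr_in_assigns: "m \<in> A \<Longrightarrow> m(v := zr v) \<in> A"
  using types unfolding assigns_def by auto

definition state_after_UK ::
    "(('v \<Rightarrow> 'a) \<Rightarrow> ('v \<Rightarrow> 'a) \<Rightarrow> complex) \<Rightarrow> ('v \<Rightarrow> 'a) \<Rightarrow> ('v \<Rightarrow> 'a) \<Rightarrow> complex" where
  "state_after_UK \<rho> = (\<lambda>m p. if m \<in> A \<and> p \<in> A then
     (1/4) * (\<Sum>k\<in>UNIV. \<rho> (m(x := ex k)) (p(x := ex k))) else 0)"

definition state_after_init_w ::
    "(('v \<Rightarrow> 'a) \<Rightarrow> ('v \<Rightarrow> 'a) \<Rightarrow> complex) \<Rightarrow> ('v \<Rightarrow> 'a) \<Rightarrow> ('v \<Rightarrow> 'a) \<Rightarrow> complex" where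
  "state_after_init_w \<rho> = (\<lambda>m p. if m \<in> A \<and> p \<in> A \<and> m w = zr w \<and> p w = zr w then
     (1/4) * (\<Sum>l\<in>UNIV. \<Sum>k\<in>UNIV. \<rho> (m(x := ex k, w := ew l)) (p(x := ex k, w := ew l))) else 0)"

text \<open>The final state: the initial x and w are traced out and x holds a uniformly random
  classical key. The factor [m x = p x] is the decoherence caused by copying x into w and
  discarding the copy.\<close>
definition keyed_state ::
    "(('v \<Rightarrow> 'a) \<Rightarrow> ('v \<Rightarrow> 'a) \<Rightarrow> complex) \<Rightarrow> ('v \<Rightarrow> 'a) \<Rightarrow> ('v \<Rightarrow> 'a) \<Rightarrow> complex" where
  "keyed_state \<rho> = (\<lambda>m p. if m \<in> A \<and> p \<in> A \<and> m w = zr w \<and> p w = zr w \<and> m x = p x then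
     (1/4) * (\<Sum>l\<in>UNIV. \<Sum>k\<in>UNIV. \<rho> (m(x := ex k, w := ew l)) (p(x := ex k, w := ew l))) else 0)"

definition w_copies_x :: "('v \<Rightarrow> 'a) \<Rightarrow> bool" where
  "w_copies_x q \<longleftrightarrow> (\<exists>a. q x = ex a \<and> q w = ew a)"

lemma sem_init_x_UK: "sem ty zr Xall (Apply UK {x}) (sem ty zr Xall (Init x) \<rho>) = state_after_UK \<rho>"
proof (intro ext)
  fix m p
  define \<rho>1 where "\<rho>1 = (\<lambda>m p. if m \<in> A \<and> p \<in> A \<and> m x = zr x \<and> p x = zr x
      then \<Sum>k\<in>UNIV. \<rho> (m(x := ex k)) (p(x := ex k)) else 0)"
  have e1: "sem ty zr Xall (Init x) \<rho> = \<rho>1"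
    unfolding \<rho>1_def by (rule sem_Init[OF vars(1) type_x types])
  have supp: "\<forall>n n'. \<rho>1 n n' \<noteq> 0 \<longrightarrow> n x = zr x \<and> n' x = zr x"
    unfolding \<rho>1_def by (auto split: if_splits)
  have uk: "UK (restr zr {x} q) zr = 1/2" if qA: "q \<in> A" for q
  proof -
    obtain k where "q x = ex k" by (rule assigns_in_range[OF type_x qA vars(1)])
    then have "restr zr {x} q = zr(x := ex k)" by (simp add: restr_singleton)
    then have "\<exists>k. restr zr {x} q = zr(x := ex k)" by blast
    moreover have "UK (restr zr {x} q) zr = (if \<exists>k. restr zr {x} q = zr(x := ex k) then 1/2 else 0)"
      using UK by blast
    ultimately show ?thesis by (simp only: if_True)
  qed
  have r1: "\<rho>1 (m(x := zr x)) (p(x := zr x)) = (\<Sum>k\<in>UNIV. \<rho> (m(x := ex k)) (p(x := ex k)))"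
    if "m \<in> A" "p \<in> A"
    unfolding \<rho>1_def using that upd_zr_in_assigns by simp
  show "sem ty zr Xall (Apply UK {x}) (sem ty zr Xall (Init x) \<rho>) m p = state_after_UK \<rho> m p"
    unfolding e1 sem_apply_zeroed_var[OF supp vars(1) types]
    by (cases "m \<in> A"; cases "p \<in> A") (simp_all add: state_after_UK_def uk r1)
qed

lemma sem_init_w: "sem ty zr Xall (Init w) (state_after_UK \<rho>) = state_after_init_w \<rho>"
proof (intro ext)
  fix m p
  show "sem ty zr Xall (Init w) (state_after_UK \<rho>) m p = state_after_init_w \<rho> m p"
  proof (cases "m \<in> A \<and> p \<in> A \<and> m w = zr w \<and> p w = zr w")
    case True
    have twist: "q(w := ew l, x := ex k) = q(x := ex k, w := ew l)" for q l k
      by (rule fun_upd_twist[OF distinct_vars(2), symmetric])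
    have "sem ty zr Xall (Init w) (state_after_UK \<rho>) m p =
        (\<Sum>l\<in>UNIV. state_after_UK \<rho> (m(w := ew l)) (p(w := ew l)))"
      unfolding sem_Init[OF vars(3) type_w(1) types] using True by simp
    also have "\<dots> = (\<Sum>l\<in>UNIV. (1/4) * (\<Sum>k\<in>UNIV. \<rho> (m(x := ex k, w := ew l)) (p(x := ex k, w := ew l))))"
      using True upd_w_in_assigns unfolding state_after_UK_def twist by (intro sum.cong) simp_all
    also have "\<dots> = state_after_init_w \<rho> m p"
      unfolding state_after_init_w_def using True by (simp add: sum_distrib_left)
    finally show ?thesis .
  next
    case False
    then show ?thesis
      unfolding sem_Init[OF vars(3) type_w(1) types] state_after_init_w_def by (simp only: if_False)
  qed
qed

lemma sem_U0_id:
  assumes supp: "\<And>n n'. \<sigma> n n' \<noteq> 0 \<Longrightarrow> n \<in> A \<and> n' \<in> A \<and> n w = zr w \<and> n' w = zr w"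
  shows "sem ty zr Xall (Apply U0 {w}) \<sigma> = \<sigma>"
proof (intro ext)
  fix m p
  have u0: "U0 (restr zr {w} q) zr = (if q w = zr w then 1 else 0)" for q
    using U0 restr_singleton_eq_zr[of zr w q] by simp
  have E: "sem ty zr Xall (Apply U0 {w}) \<sigma> m p = (if m \<in> A then U0 (restr zr {w} m) zr else 0) *
       (\<sigma> (m(w := zr w)) (p(w := zr w)) * cnj (if p \<in> A then U0 (restr zr {w} p) zr else 0))"
    by (rule sem_apply_zeroed_var[OF _ vars(3) types]) (use supp in blast)
  show "sem ty zr Xall (Apply U0 {w}) \<sigma> m p = \<sigma> m p"
  proof (cases "m \<in> A \<and> p \<in> A \<and> m w = zr w \<and> p w = zr w")
    case True
    then have "m(w := zr w) = m" "p(w := zr w) = p" by auto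
    then show ?thesis unfolding E using True by (simp add: u0)
  next
    case False
    then have "\<sigma> m p = 0" using supp by blast
    then show ?thesis unfolding E u0 using False by auto
  qed
qed

lemma lift_cnotK_nonzero:
  assumes nz: "lift_op ty zr Xall {x, w} (cnotK zr x w ex ew) q n \<noteq> 0" and nw: "n w = zr w"
  shows "n = q(w := zr w)"
proof
  fix u
  obtain a b where "restr zr {x, w} n = zr(x := ex a, w := ew b)"
      "restr zr {x, w} q = zr(x := ex a, w := ew (xor2 a b))"
    using lift_op_nonzero(4)[OF nz] unfolding cnotK_def by (auto split: if_splits)
  then have "n x = q x" unfolding restr_pair_eq[OF distinct_vars(2)] by auto
  then show "n u = (q(w := zr w)) u"
    using lift_op_nonzero(3)[OF nz, of u] nw by (cases "u = x \<or> u = w") auto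
qed

text \<open>CNOT maps |a\<rangle>|0\<rangle> to |a\<rangle>|a\<rangle>, so the matrix entry at (q, q with w reset) is the test
  whether w holds a copy of x.\<close>
lemma cnotK_reset_w_iff:
  "(\<exists>a b. restr zr {x, w} (q(w := zr w)) = zr(x := ex a, w := ew b) \<and>
          restr zr {x, w} q = zr(x := ex a, w := ew (xor2 a b))) \<longleftrightarrow> w_copies_x q"
proof
  note xw = distinct_vars(2)
  have ew0: "ew b = zr w \<longleftrightarrow> b = (False, False)" for b
    using type_w(2) inj_eq[OF inj_ew] by metis
  have xor0: "xor2 a (False, False) = a" for a by (simp add: xor2_def)
  {
    assume "\<exists>a b. restr zr {x, w} (q(w := zr w)) = zr(x := ex a, w := ew b) \<and>
                 restr zr {x, w} q = zr(x := ex a, w := ew (xor2 a b))"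
    then obtain a b where "q x = ex a" "zr w = ew b" "q w = ew (xor2 a b)"
      unfolding restr_pair_eq[OF xw] using xw by auto
    then show "w_copies_x q" unfolding w_copies_x_def using ew0 xor0 by metis
  next
    assume "w_copies_x q"
    then obtain a where "q x = ex a" "q w = ew a" unfolding w_copies_x_def by blast
    then show "\<exists>a b. restr zr {x, w} (q(w := zr w)) = zr(x := ex a, w := ew b) \<and>
                 restr zr {x, w} q = zr(x := ex a, w := ew (xor2 a b))"
      unfolding restr_pair_eq[OF xw] using xw type_w(2) xor0
      by (intro exI[of _ a] exI[of _ "(False, False)"]) simp
  }
qed

lemma lift_cnotK_reset_w:
  "lift_op ty zr Xall {x, w} (cnotK zr x w ex ew) q (q(w := zr w)) = of_bool (q \<in> A \<and> w_copies_x q)"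
proof (cases "q \<in> A")
  case True
  have qa: "q(w := zr w) \<in> A" using upd_zr_in_assigns[OF True] .
  have ag: "\<forall>v. v \<notin> {x, w} \<longrightarrow> q v = (q(w := zr w)) v" by simp
  have "lift_op ty zr Xall {x, w} (cnotK zr x w ex ew) q (q(w := zr w)) = of_bool (w_copies_x q)"
    unfolding lift_op_def cnotK_def
    by (simp only: if_P[OF conjI[OF True conjI[OF qa ag]]] cnotK_reset_w_iff of_bool_def)
  then show ?thesis using True by simp
next
  case False then show ?thesis unfolding lift_op_def by simp
qed

lemma sem_cnot:
  assumes supp: "\<And>n n'. \<sigma> n n' \<noteq> 0 \<Longrightarrow> n w = zr w \<and> n' w = zr w"
  shows "sem ty zr Xall (Apply (cnotK zr x w ex ew) {x, w}) \<sigma> m p =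
    of_bool (m \<in> A \<and> w_copies_x m) * \<sigma> (m(w := zr w)) (p(w := zr w)) * of_bool (p \<in> A \<and> w_copies_x p)"
proof -
  have "sem ty zr Xall (Apply (cnotK zr x w ex ew) {x, w}) \<sigma> m p =
     lift_op ty zr Xall {x, w} (cnotK zr x w ex ew) m (m(w := zr w)) * (\<sigma> (m(w := zr w)) (p(w := zr w)) *
       cnj (lift_op ty zr Xall {x, w} (cnotK zr x w ex ew) p (p(w := zr w))))"
    by (rule sem_apply_graph) (use lift_cnotK_nonzero supp in blast)+
  then show ?thesis unfolding lift_cnotK_reset_w by simp
qed

lemma w_copies_x_upd: "w_copies_x (q(w := ew l)) \<longleftrightarrow> q x = ex l"
proof
  assume "w_copies_x (q(w := ew l))"
  then obtain a where "q x = ex a" "ew l = ew a"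
    unfolding w_copies_x_def fun_upd_same fun_upd_other[OF distinct_vars(2)] by blast
  then show "q x = ex l" using injD[OF inj_ew] by metis
next
  assume "q x = ex l"
  then show "w_copies_x (q(w := ew l))"
    unfolding w_copies_x_def using distinct_vars(2) by (intro exI[of _ l]) simp
qed

definition state_after_cnot ::
    "(('v \<Rightarrow> 'a) \<Rightarrow> ('v \<Rightarrow> 'a) \<Rightarrow> complex) \<Rightarrow> ('v \<Rightarrow> 'a) \<Rightarrow> ('v \<Rightarrow> 'a) \<Rightarrow> complex" where
  "state_after_cnot \<rho> = (\<lambda>m p. of_bool (m \<in> A \<and> w_copies_x m) *
     state_after_init_w \<rho> (m(w := zr w)) (p(w := zr w)) * of_bool (p \<in> A \<and> w_copies_x p))"

text \<open>Once w is traced out again, only the branch where w held the current key survives.\<close>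
lemma state_after_cnot_upd_w:
  assumes mA: "m \<in> A" and pA: "p \<in> A" and mw: "m w = zr w" and pw: "p w = zr w" and a0: "m x = ex a0"
  shows "state_after_cnot \<rho> (m(w := ew l)) (p(w := ew l)) =
    (if l = a0 then state_after_init_w \<rho> m p * of_bool (p x = m x) else 0)"
proof (cases "l = a0")
  case True
  have "w_copies_x (m(w := ew l))" "w_copies_x (p(w := ew l)) \<longleftrightarrow> p x = m x"
    using w_copies_x_upd a0 True by simp_all
  moreover have "m(w := ew l, w := zr w) = m" "p(w := ew l, w := zr w) = p" using mw pw by auto
  ultimately show ?thesis
    using True upd_w_in_assigns[OF mA] upd_w_in_assigns[OF pA] unfolding state_after_cnot_def
    by simp
next
  case False
  then have "\<not> w_copies_x (m(w := ew l))" using w_copies_x_upd a0 inj_eq[OF inj_ex] by simp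
  then show ?thesis using False unfolding state_after_cnot_def by simp
qed

lemma sem_reinit_w: "sem ty zr Xall (Init w) (state_after_cnot \<rho>) = keyed_state \<rho>"
proof (intro ext)
  fix m p
  show "sem ty zr Xall (Init w) (state_after_cnot \<rho>) m p = keyed_state \<rho> m p"
  proof (cases "m \<in> A \<and> p \<in> A \<and> m w = zr w \<and> p w = zr w")
    case False
    then have "\<not> (m \<in> A \<and> p \<in> A \<and> m w = zr w \<and> p w = zr w \<and> m x = p x)" by blast
    with False show ?thesis
      unfolding sem_Init[OF vars(3) type_w(1) types] keyed_state_def by (simp only: if_False)
  next
    case True
    then have mA: "m \<in> A" and pA: "p \<in> A" and mw: "m w = zr w" and pw: "p w = zr w" by auto
    obtain a0 where a0: "m x = ex a0" by (rule assigns_in_range[OF type_x mA vars(1)])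
    have "sem ty zr Xall (Init w) (state_after_cnot \<rho>) m p =
        (\<Sum>l\<in>UNIV. state_after_cnot \<rho> (m(w := ew l)) (p(w := ew l)))"
      unfolding sem_Init[OF vars(3) type_w(1) types] using True by (simp only: simp_thms if_True)
    also have "\<dots> = state_after_init_w \<rho> m p * of_bool (p x = m x)"
      by (simp add: state_after_cnot_upd_w[OF mA pA mw pw a0])
    also have "\<dots> = keyed_state \<rho> m p"
    proof (cases "m x = p x")
      case eq: True
      with True show ?thesis
        unfolding state_after_init_w_def keyed_state_def by (simp only: simp_thms if_True of_bool_def mult_1_right)
    next
      case False
      with True show ?thesis
        unfolding state_after_init_w_def keyed_state_def
        by (simp only: simp_thms if_True if_False of_bool_def eq_commute[of "p x"] mult_zero_right)
    qed
    finally show ?thesis .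
  qed
qed

definition pauli_upd :: "('v \<Rightarrow> 'a) \<Rightarrow> ('v \<Rightarrow> 'a)" where
  "pauli_upd q = q(y := ey (pauli_bit (inv ex (q x)) (inv ey (q y))))"

lemma pauli_upd_eq: "q x = ex k \<Longrightarrow> q y = ey b \<Longrightarrow> pauli_upd q = q(y := ey (pauli_bit k b))"
  unfolding pauli_upd_def by (simp add: inv_f_f[OF inj_ex] inv_f_f[OF inj_ey])

lemma sem_ctrlK:
  assumes M: "\<And>k b b'. M k b b' \<noteq> 0 \<Longrightarrow> b' = pauli_bit k b"
  shows "sem ty zr Xall (Apply (ctrlK zr x y ex ey M) {x, y}) \<sigma> m p =
    lift_op ty zr Xall {x, y} (ctrlK zr x y ex ey M) m (pauli_upd m) * (\<sigma> (pauli_upd m) (pauli_upd p) *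
      cnj (lift_op ty zr Xall {x, y} (ctrlK zr x y ex ey M) p (pauli_upd p)))"
proof (rule sem_apply_graph)
  have "n = pauli_upd q" if nz: "lift_op ty zr Xall {x, y} (ctrlK zr x y ex ey M) q n \<noteq> 0" for q n
  proof -
    obtain k b b' where "q x = ex k" "q y = ey b" "n = q(y := ey b')" "M k b b' \<noteq> 0"
      using lift_ctrlK_nonzero[OF distinct_vars(1) nz] .
    then show ?thesis using M pauli_upd_eq by simp
  qed
  then show "\<And>m n n'. lift_op ty zr Xall {x, y} (ctrlK zr x y ex ey M) m n \<noteq> 0 \<Longrightarrow> \<sigma> n n' \<noteq> 0 \<Longrightarrow> n = pauli_upd m"
    and "\<And>m n n'. lift_op ty zr Xall {x, y} (ctrlK zr x y ex ey M) m n' \<noteq> 0 \<Longrightarrow> \<sigma> n n' \<noteq> 0 \<Longrightarrow> n' = pauli_upd m"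
    by blast+
qed

lemma pauli_upd_cases:
  assumes qA: "q \<in> A"
  obtains k b where "q x = ex k" "q y = ey b" "pauli_upd q = q(y := ey (pauli_bit k b))"
    "pauli_upd q \<in> A" "pauli_upd (pauli_upd q) = q"
proof -
  obtain k where k: "q x = ex k" by (rule assigns_in_range[OF type_x qA vars(1)])
  obtain b where b: "q y = ey b" by (rule assigns_in_range[OF type_y qA vars(2)])
  have f1: "pauli_upd q = q(y := ey (pauli_bit k b))" by (rule pauli_upd_eq[OF k b])
  have "(pauli_upd q) x = ex k" "(pauli_upd q) y = ey (pauli_bit k b)"
    using f1 k distinct_vars(1) by auto
  then have "pauli_upd (pauli_upd q) = q"
    using pauli_upd_eq f1 b by auto
  then show ?thesis using that k b f1 upd_y_in_assigns[OF qA] by simp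
qed

lemma lift_decM_encM:
  assumes qA: "q \<in> A"
  shows "lift_op ty zr Xall {x, y} (ctrlK zr x y ex ey decM) q (pauli_upd q) *
    lift_op ty zr Xall {x, y} (ctrlK zr x y ex ey encM) (pauli_upd q) (pauli_upd (pauli_upd q)) = 1"
proof -
  obtain k b where k: "q x = ex k" and b: "q y = ey b" and f1: "pauli_upd q = q(y := ey (pauli_bit k b))"
    and pA: "pauli_upd q \<in> A" and f2: "pauli_upd (pauli_upd q) = q"
    using pauli_upd_cases[OF qA] .
  have k1: "(pauli_upd q) x = ex k" "(pauli_upd q) y = ey (pauli_bit k b)"
    using f1 k distinct_vars(1) by auto
  have "q = (pauli_upd q)(y := ey b)" using f1 b by auto
  then have "lift_op ty zr Xall {x, y} (ctrlK zr x y ex ey encM) (pauli_upd q) (pauli_upd (pauli_upd q)) =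
      encM k (pauli_bit k b) b"
    unfolding f2 by (metis lift_ctrlK_upd[OF distinct_vars(1) inj_ex inj_ey pA upd_y_in_assigns[OF pA] k1])
  moreover have "lift_op ty zr Xall {x, y} (ctrlK zr x y ex ey decM) q (pauli_upd q) = decM k b (pauli_bit k b)"
    unfolding f1 by (rule lift_ctrlK_upd[OF distinct_vars(1) inj_ex inj_ey qA upd_y_in_assigns[OF qA] k b])
  ultimately show ?thesis using decM_encM by simp
qed

lemma sem_enc_dec:
  assumes supp: "\<And>n n'. \<sigma> n n' \<noteq> 0 \<Longrightarrow> n \<in> A \<and> n' \<in> A"
  shows "sem ty zr Xall (Apply (ctrlK zr x y ex ey decM) {x, y})
           (sem ty zr Xall (Apply (ctrlK zr x y ex ey encM) {x, y}) \<sigma>) = \<sigma>"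
proof (intro ext)
  fix m p
  let ?L = "\<lambda>M. lift_op ty zr Xall {x, y} (ctrlK zr x y ex ey M)"
  have ctrl: "sem ty zr Xall (Apply (ctrlK zr x y ex ey M) {x, y}) \<tau> q r =
      ?L M q (pauli_upd q) * (\<tau> (pauli_upd q) (pauli_upd r) * cnj (?L M r (pauli_upd r)))"
    if "\<And>k b b'. M k b b' \<noteq> 0 \<Longrightarrow> b' = pauli_bit k b" for M \<tau> q r
    by (rule sem_ctrlK) (rule that)
  have "sem ty zr Xall (Apply (ctrlK zr x y ex ey decM) {x, y})
      (sem ty zr Xall (Apply (ctrlK zr x y ex ey encM) {x, y}) \<sigma>) m p =
      ?L decM m (pauli_upd m) * (sem ty zr Xall (Apply (ctrlK zr x y ex ey encM) {x, y}) \<sigma>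
        (pauli_upd m) (pauli_upd p) * cnj (?L decM p (pauli_upd p)))"
    by (rule ctrl) (rule decM_nonzero)
  moreover have "sem ty zr Xall (Apply (ctrlK zr x y ex ey encM) {x, y}) \<sigma> (pauli_upd m) (pauli_upd p) =
      ?L encM (pauli_upd m) (pauli_upd (pauli_upd m)) * (\<sigma> (pauli_upd (pauli_upd m)) (pauli_upd (pauli_upd p)) *
        cnj (?L encM (pauli_upd p) (pauli_upd (pauli_upd p))))"
    by (rule ctrl) (rule encM_nonzero)
  ultimately have D: "sem ty zr Xall (Apply (ctrlK zr x y ex ey decM) {x, y})
      (sem ty zr Xall (Apply (ctrlK zr x y ex ey encM) {x, y}) \<sigma>) m p =
      (?L decM m (pauli_upd m) * ?L encM (pauli_upd m) (pauli_upd (pauli_upd m))) *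
      \<sigma> (pauli_upd (pauli_upd m)) (pauli_upd (pauli_upd p)) *
      cnj (?L decM p (pauli_upd p) * ?L encM (pauli_upd p) (pauli_upd (pauli_upd p)))"
    by (simp only: complex_cnj_mult mult_ac)
  show "sem ty zr Xall (Apply (ctrlK zr x y ex ey decM) {x, y})
      (sem ty zr Xall (Apply (ctrlK zr x y ex ey encM) {x, y}) \<sigma>) m p = \<sigma> m p"
  proof (cases "m \<in> A \<and> p \<in> A")
    case True
    then have mA: "m \<in> A" and pA: "p \<in> A" by auto
    obtain "pauli_upd (pauli_upd m) = m" "pauli_upd (pauli_upd p) = p"
      using pauli_upd_cases[OF mA] pauli_upd_cases[OF pA] by metis
    then show ?thesis unfolding D lift_decM_encM[OF mA] lift_decM_encM[OF pA] by simp
  next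
    case False
    have "q \<notin> A \<Longrightarrow> ?L decM q n = 0" for q n unfolding lift_op_def by simp
    then have "?L decM m (pauli_upd m) = 0 \<or> ?L decM p (pauli_upd p) = 0" using False by blast
    moreover have "\<sigma> m p = 0" using False supp by blast
    ultimately show ?thesis unfolding D by auto
  qed
qed

lemma sem_qotp:
  assumes mix: "is_mixed ty zr Xall \<rho>"
  shows "sem ty zr Xall
     (Seq
       (Seq (Init x) (Seq (Apply UK {x}) (Seq (Init w) (Seq (Apply U0 {w})
         (Seq (Apply (cnotK zr x w ex ew) {x, w}) (Seq (Init w) (Apply U0 {w})))))))
       (Seq (Apply (ctrlK zr x y ex ey encM) {x, y})
            (Apply (ctrlK zr x y ex ey decM) {x, y}))) \<rho> = keyed_state \<rho>"
proof -
  have supp3: "\<And>n n'. state_after_init_w \<rho> n n' \<noteq> 0 \<Longrightarrow> n \<in> A \<and> n' \<in> A \<and> n w = zr w \<and> n' w = zr w"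
    unfolding state_after_init_w_def by (auto split: if_splits)
  have supp_keyed: "\<And>n n'. keyed_state \<rho> n n' \<noteq> 0 \<Longrightarrow> n \<in> A \<and> n' \<in> A \<and> n w = zr w \<and> n' w = zr w"
    unfolding keyed_state_def by (auto split: if_splits)
  have cnot: "sem ty zr Xall (Apply (cnotK zr x w ex ew) {x, w}) (state_after_init_w \<rho>) =
      state_after_cnot \<rho>"
    unfolding state_after_cnot_def by (intro ext sem_cnot) (use supp3 in blast)
  have keygen: "sem ty zr Xall (Apply U0 {w}) (sem ty zr Xall (Init w)
      (sem ty zr Xall (Apply (cnotK zr x w ex ew) {x, w}) (sem ty zr Xall (Apply U0 {w})
      (sem ty zr Xall (Init w) (sem ty zr Xall (Apply UK {x}) (sem ty zr Xall (Init x) \<rho>)))))) =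
      keyed_state \<rho>"
  proof -
    have "sem ty zr Xall (Apply U0 {w}) (state_after_init_w \<rho>) = state_after_init_w \<rho>"
      by (rule sem_U0_id) (use supp3 in blast)
    moreover have "sem ty zr Xall (Apply U0 {w}) (keyed_state \<rho>) = keyed_state \<rho>"
      by (rule sem_U0_id) (use supp_keyed in blast)
    ultimately show ?thesis by (simp only: sem_init_x_UK sem_init_w cnot sem_reinit_w)
  qed
  have "sem ty zr Xall (Apply (ctrlK zr x y ex ey decM) {x, y})
      (sem ty zr Xall (Apply (ctrlK zr x y ex ey encM) {x, y}) (keyed_state \<rho>)) = keyed_state \<rho>"
    by (rule sem_enc_dec) (use supp_keyed in blast)
  then show ?thesis by (simp only: sem.simps(2) keygen)
qed

definition key_fibre :: "bool \<times> bool \<Rightarrow> ('v \<Rightarrow> 'a) set" where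
  "key_fibre q = {m \<in> A. m w = zr w \<and> m x = ex q}"

lemma keyed_state_eq_sum:
  "keyed_state \<rho> m p = (\<Sum>q\<in>UNIV. \<Sum>l\<in>UNIV. \<Sum>k\<in>UNIV.
     if m \<in> key_fibre q \<and> p \<in> key_fibre q
     then 1/2 * cnj (1/2) * \<rho> (m(x := ex k, w := ew l)) (p(x := ex k, w := ew l)) else 0)"
proof -
  let ?T = "(1/4) * (\<Sum>l\<in>UNIV. \<Sum>k\<in>UNIV. \<rho> (m(x := ex k, w := ew l)) (p(x := ex k, w := ew l)))"
  have "(\<Sum>l\<in>UNIV. \<Sum>k\<in>UNIV. if P then 1/2 * cnj (1/2) * \<rho> (m(x := ex k, w := ew l)) (p(x := ex k, w := ew l)) else 0)
      = (if P then ?T else 0)" for P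
    by (cases P) (simp_all add: sum_distrib_left)
  then have "(\<Sum>q\<in>UNIV. \<Sum>l\<in>UNIV. \<Sum>k\<in>UNIV.
     if m \<in> key_fibre q \<and> p \<in> key_fibre q
     then 1/2 * cnj (1/2) * \<rho> (m(x := ex k, w := ew l)) (p(x := ex k, w := ew l)) else 0) =
     (\<Sum>q\<in>UNIV. if m \<in> key_fibre q \<and> p \<in> key_fibre q then ?T else 0)"
    by simp
  also have "\<dots> = keyed_state \<rho> m p"
  proof (cases "m \<in> A \<and> p \<in> A \<and> m w = zr w \<and> p w = zr w")
    case True
    then have mA: "m \<in> A" by blast
    obtain a0 where a0: "m x = ex a0" by (rule assigns_in_range[OF type_x mA vars(1)])
    have iff: "m \<in> key_fibre q \<and> p \<in> key_fibre q \<longleftrightarrow> q = a0 \<and> m x = p x" for q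
      using True a0 inj_eq[OF inj_ex] unfolding key_fibre_def by auto
    show ?thesis unfolding iff using True unfolding keyed_state_def by (cases "m x = p x") simp_all
  next
    case False
    then show ?thesis unfolding keyed_state_def key_fibre_def by auto
  qed
  finally show ?thesis ..
qed

lemma is_mixed_keyed_state:
  assumes "is_mixed ty zr Xall \<rho>"
  shows "is_mixed ty zr Xall (keyed_state \<rho>)"
proof -
  obtain \<phi> where dec: "decomp ty zr Xall \<rho> \<phi>" using assms unfolding is_mixed_def by blast
  have "is_mixed ty zr Xall (\<lambda>m p. if m \<in> key_fibre q \<and> p \<in> key_fibre q
      then 1/2 * cnj (1/2) * \<rho> (m(x := ex k, w := ew l)) (p(x := ex k, w := ew l)) else 0)" for q l k
  proof -
    have "inj_on (\<lambda>m. m(x := ex k, w := ew l)) (key_fibre q)"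
    proof
      fix m m' assume "m \<in> key_fibre q" "m' \<in> key_fibre q" "m(x := ex k, w := ew l) = m'(x := ex k, w := ew l)"
      then show "m = m'" unfolding key_fibre_def by (auto simp: fun_eq_iff) (metis fun_upd_other)
    qed
    moreover have "key_fibre q \<subseteq> A" unfolding key_fibre_def by blast
    ultimately show ?thesis
      using decomp_restrict_reindex[OF dec] unfolding is_mixed_def by blast
  qed
  then show ?thesis
    unfolding keyed_state_eq_sum by (intro is_mixed_sum)
qed

lemma factor_op_keyed_state:
  assumes R: "factor_op ty zr Xall Y \<psi> \<rho>" and xY: "x \<notin> Y" and wY: "w \<notin> Y"
  shows "factor_op ty zr Xall Y \<psi> (keyed_state \<rho>)"
proof -
  have "keyed_state \<rho> m p * \<psi> (restr zr Y m') = keyed_state \<rho> m' p * \<psi> (restr zr Y m)"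
    if ag: "agree_off ty zr Xall Y m m'" for m m' p
  proof -
    have mA: "m \<in> A" "m' \<in> A" and oth: "\<And>v. v \<notin> Y \<Longrightarrow> m v = m' v"
      using ag unfolding agree_off_def by auto
    have mx: "m x = m' x" "m w = m' w" using oth xY wY by auto
    show ?thesis
    proof (cases "p \<in> A \<and> m w = zr w \<and> p w = zr w \<and> m x = p x")
      case False
      then show ?thesis unfolding keyed_state_def using mx by auto
    next
      case True
      have rr: "restr zr Y (q(x := ex k, w := ew l)) = restr zr Y q" for q k l
        unfolding restr_def using xY wY by (auto simp: fun_eq_iff)
      have "agree_off ty zr Xall Y (m(x := ex k, w := ew l)) (m'(x := ex k, w := ew l))" for k l
        unfolding agree_off_def using upd_w_in_assigns[OF upd_x_in_assigns] mA oth by auto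
      then have tm: "\<rho> (m(x := ex k, w := ew l)) (p(x := ex k, w := ew l)) * \<psi> (restr zr Y m') =
          \<rho> (m'(x := ex k, w := ew l)) (p(x := ex k, w := ew l)) * \<psi> (restr zr Y m)" for k l
        using R rr unfolding factor_op_def by metis
      show ?thesis
        using True mA mx unfolding keyed_state_def by (simp add: sum_distrib_right tm)
    qed
  qed
  moreover have "keyed_state \<rho> m p = 0" if "\<psi> = (\<lambda>_. 0)" for m p
    using R that unfolding factor_op_def keyed_state_def by simp
  ultimately show ?thesis unfolding factor_op_def by blast
qed

end
theorem mainTheorem2:
  fixes ty :: "'v \<Rightarrow> 'a set" and zr :: "'v \<Rightarrow> 'a"
    and Xall E U :: "'v set" and x y w z :: 'v
    and ex ew :: "bool \<times> bool \<Rightarrow> 'a" and ey :: "bool \<Rightarrow> 'a"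
    and UK U0 :: "('v \<Rightarrow> 'a) \<Rightarrow> ('v \<Rightarrow> 'a) \<Rightarrow> complex"
    and \<psi> :: "('v \<Rightarrow> 'a) \<Rightarrow> complex"
  assumes types: "\<forall>v. zr v \<in> ty v"
    and kinds: "Xall \<inter> E = {}" "Xall \<inter> U = {}" "E \<inter> U = {}"
    and vars: "x \<in> Xall" "y \<in> Xall" "w \<in> Xall" "z \<in> Xall"
    and distinct: "x \<noteq> y" "x \<noteq> w" "y \<noteq> w" "z \<noteq> x" "z \<noteq> y" "z \<noteq> w"
    and type_x: "bij_betw ex UNIV (ty x)" "ex (False, False) = zr x"
    and type_y: "bij_betw ey UNIV (ty y)" "ey False = zr y"
    and type_w: "bij_betw ew UNIV (ty w)" "ew (False, False) = zr w"
    and UK: "is_isometry ty zr {x} UK"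
            "\<forall>m. UK m zr = (if \<exists>k. m = zr(x := ex k) then 1/2 else 0)"
    and U0: "is_isometry ty zr {w} U0"
            "\<forall>m. U0 m zr = (if m = zr then 1 else 0)"
    and psi: "\<psi> \<in> ell2 ty zr {y, z}"
  shows "hoare ty zr Xall E U
     (eqq ty zr (Xall \<union> E \<union> U) {y, z} \<psi>)
     (Seq
       (Seq (Init x) (Seq (Apply UK {x}) (Seq (Init w) (Seq (Apply U0 {w})
         (Seq (Apply (cnotK zr x w ex ew) {x, w}) (Seq (Init w) (Apply U0 {w})))))))
       (Seq (Apply (ctrlK zr x y ex ey encM) {x, y})
            (Apply (ctrlK zr x y ex ey decM) {x, y})))
     (eqq ty zr (Xall \<union> E \<union> U) {y, z} \<psi>)"
  unfolding hoare_def
proof (intro allI impI, elim conjE)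
  fix \<rho>
  assume mix: "is_mixed ty zr Xall \<rho>" and pre: "sat ty zr Xall E U \<rho> (eqq ty zr (Xall \<union> E \<union> U) {y, z} \<psi>)"
  interpret K: qotp_program ty zr Xall x y w ex ew ey UK U0
    using types vars distinct type_x type_y type_w UK(2) U0(2) by unfold_locales auto
  have Y: "{y, z} \<subseteq> Xall" using vars by auto
  have "factor_op ty zr Xall {y, z} \<psi> \<rho>"
    by (rule factor_op_of_sat[OF pre Y _ psi types]) (use kinds in auto)
  then have "factor_op ty zr Xall {y, z} \<psi> (K.keyed_state \<rho>)"
    by (rule K.factor_op_keyed_state) (use distinct in auto)
  with K.is_mixed_keyed_state[OF mix] show "sat ty zr Xall E U (sem ty zr Xall
     (Seq
       (Seq (Init x) (Seq (Apply UK {x}) (Seq (Init w) (Seq (Apply U0 {w})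
         (Seq (Apply (cnotK zr x w ex ew) {x, w}) (Seq (Init w) (Apply U0 {w})))))))
       (Seq (Apply (ctrlK zr x y ex ey encM) {x, y})
            (Apply (ctrlK zr x y ex ey decM) {x, y}))) \<rho>) (eqq ty zr (Xall \<union> E \<union> U) {y, z} \<psi>)"
    unfolding K.sem_qotp[OF mix] using Y kinds psi types by (intro sat_eqq_of_factor_op)
qed
end
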